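(* Let $q$ be a prime power and let $k,u,h$ be positive integers with $u\ge 2$, $k\ge hu$, $q^k-q^{k-1}>h(q^u-1)$ and $i_h+u>\sum_{i=1}^{k-u}\lfloor h/q^i\rfloor$. For $i=1,\dots,h$ let $U_i=\langle \mathbf e_{(i-1)u+1},\dots,\mathbf e_{iu}\rangle\subseteq\mathbf F_q^k$, where $\mathbf e_j$ is the $j$-th standard basis vector. Let $U$ be the set of nonzero vectors of $\mathbf F_q^k$ not lying in $U_1\cup\cdots\cup U_h$, let $\widetilde G$ be a $k\times\frac{|U|}{q-1}$ matrix whose columns consist of exactly one representative of each class $\{\lambda\mathbf v:\lambda\in\mathbf F_q^*\}$, $\mathbf v\in U$, and let $\mathbf C_1$ be the linear code over $\mathbf F_q$ with generator matrix $\widetilde G$. Then $\mathbf C_1$ is a distance-optimal linear $[n,k,d]_q$ code with $$n=\frac{(q^k-1)-h(q^u-1)}{q-1},\qquad d=q^{k-1}-hq^{u-1},$$ and: (a) the weight distribution of $\mathbf C_1$ is: weight $0$ with multiplicity $1$; weight $q^{k-1}$ with multiplicity $q^{k-hu}-1$; and, for each $j=1,\dots,h$, weight $q^{k-1}-jq^{u-1}$ with multiplicity $\binom{h}{j}(q^u-1)^{j}q^{k-hu}$ (so weight $q^{k-1}-hq^{u-1}$ has multiplicity $(q^u-1)^hq^{k-hu}$, weight $q^{k-1}-(h-1)q^{u-1}$ has multiplicity $h(q^u-1)^{h-1}q^{k-hu}$, ..., weight $q^{k-1}-q^{u-1}$ has multiplicity $h(q^u-1)q^{k-hu}$); (b)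 the generalized Hamming weights of $\mathbf C_1$ are $$d_r(\mathbf C_1)=\begin{cases}\dfrac{(q^k-q^{k-r})-h(q^u-q^{u-r})}{q-1}, & 1\le r\le u,\\[2mm] \dfrac{(q^k-q^{k-r})-h(q^u-1)}{q-1}, & u\le r\le k.\end{cases}$$
   Context: For a positive integer $h$ with $q$-adic expansion $h=h_{m-1}q^{m-1}+\dots+h_0$ ($0\le h_i<q$), $i_h$ denotes the least index $i\ge 0$ with $h_i>0$. A linear $[n,k,d]_q$ code is distance optimal if no linear $[n,k,d+1]_q$ code exists. The weight distribution lists, for each weight $w$, the number of codewords of Hamming weight $w$. The support of a subcode $D$ is the set of coordinates where some codeword of $D$ is nonzero; the $r$-th generalized Hamming weight $d_r(\mathbf C)$ is the minimum support size of an $r$-dimensional subcode of $\mathbf C$. *)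

theory Defs
  imports Complex_Main
begin

text \<open>Vectors of length n over a field are modelled as functions nat => 'a vanishing
  at all indices >= n.\<close>

definition vecs :: "nat \<Rightarrow> (nat \<Rightarrow> 'a::zero) set" where
  "vecs n = {v. \<forall>i\<ge>n. v i = 0}"

definition hweight :: "nat \<Rightarrow> (nat \<Rightarrow> 'a::zero) \<Rightarrow> nat" where
  "hweight n c = card {i. i < n \<and> c i \<noteq> 0}"

definition lin_code :: "nat \<Rightarrow> (nat \<Rightarrow> 'a::field) set \<Rightarrow> bool" where
  "lin_code n C \<longleftrightarrow> C \<subseteq> vecs n \<and> (\<lambda>i. 0) \<in> C \<and>
     (\<forall>x\<in>C. \<forall>y\<in>C. (\<lambda>i. x i + y i) \<in> C) \<and>
     (\<forall>a. \<forall>x\<in>C. (\<lambda>i. a * x i) \<in> C)"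

definition lin_comb :: "(nat \<Rightarrow> 'a::field) list \<Rightarrow> (nat \<Rightarrow> 'a) \<Rightarrow> (nat \<Rightarrow> 'a)" where
  "lin_comb bs a = (\<lambda>i. \<Sum>j<length bs. a j * (bs ! j) i)"

definition lin_indep :: "(nat \<Rightarrow> 'a::field) list \<Rightarrow> bool" where
  "lin_indep bs \<longleftrightarrow> (\<forall>a. lin_comb bs a = (\<lambda>i. 0) \<longrightarrow> (\<forall>j<length bs. a j = 0))"

definition has_dim :: "(nat \<Rightarrow> 'a::field) set \<Rightarrow> nat \<Rightarrow> bool" where
  "has_dim C r \<longleftrightarrow> (\<exists>bs. length bs = r \<and> lin_indep bs \<and> C = range (lin_comb bs))"

definition min_dist :: "nat \<Rightarrow> (nat \<Rightarrow> 'a::field) set \<Rightarrow> nat" where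
  "min_dist n C = Min (hweight n ` (C - {\<lambda>i. 0}))"

definition is_nkd_code :: "nat \<Rightarrow> nat \<Rightarrow> nat \<Rightarrow> (nat \<Rightarrow> 'a::field) set \<Rightarrow> bool" where
  "is_nkd_code n k d C \<longleftrightarrow> lin_code n C \<and> has_dim C k \<and> min_dist n C = d"

definition distance_optimal :: "nat \<Rightarrow> nat \<Rightarrow> nat \<Rightarrow> (nat \<Rightarrow> 'a::field) set \<Rightarrow> bool" where
  "distance_optimal n k d C \<longleftrightarrow> is_nkd_code n k d C \<and>
     \<not> (\<exists>(C'::(nat \<Rightarrow> 'a) set) d'. d' \<ge> d + 1 \<and> is_nkd_code n k d' C')"

definition code_support :: "nat \<Rightarrow> (nat \<Rightarrow> 'a::zero) set \<Rightarrow> nat set" where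
  "code_support n D = {i. i < n \<and> (\<exists>c\<in>D. c i \<noteq> 0)}"

definition ghw :: "nat \<Rightarrow> (nat \<Rightarrow> 'a::field) set \<Rightarrow> nat \<Rightarrow> nat" where
  "ghw n C r = Min {card (code_support n D) | D. D \<subseteq> C \<and> lin_code n D \<and> has_dim D r}"

text \<open>i_h: least index of a nonzero q-adic digit of h.\<close>
definition least_digit_index :: "nat \<Rightarrow> nat \<Rightarrow> nat" where
  "least_digit_index q h = (LEAST i. (h div q ^ i) mod q > 0)"

text \<open>U_i = span of e_{(i-1)u+1},...,e_{iu} inside F^k (0-based indices (i-1)u..iu-1).\<close>
definition block_subspace :: "nat \<Rightarrow> nat \<Rightarrow> nat \<Rightarrow> (nat \<Rightarrow> 'a::zero) set" where
  "block_subspace k u i = {v \<in> vecs k. \<forall>j. v j \<noteq> 0 \<longrightarrow> (i - 1) * u \<le> j \<and> j < i * u}"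

definition U_set :: "nat \<Rightarrow> nat \<Rightarrow> nat \<Rightarrow> (nat \<Rightarrow> 'a::zero) set" where
  "U_set k u h = {v \<in> vecs k. v \<noteq> (\<lambda>i. 0) \<and> (\<forall>i\<in>{1..h}. v \<notin> block_subspace k u i)}"

definition proj_reps :: "(nat \<Rightarrow> 'a::field) set \<Rightarrow> (nat \<Rightarrow> 'a) list \<Rightarrow> bool" where
  "proj_reps S cols \<longleftrightarrow> set cols \<subseteq> S \<and>
     (\<forall>v\<in>S. \<exists>!j. j < length cols \<and> (\<exists>l. l \<noteq> 0 \<and> cols ! j = (\<lambda>i. l * v i)))"

definition gen_code :: "nat \<Rightarrow> (nat \<Rightarrow> 'a::field) list \<Rightarrow> (nat \<Rightarrow> 'a) set" where
  "gen_code k cols = (\<lambda>x. (\<lambda>j. if j < length cols then \<Sum>i<k. x i * (cols ! j) i else 0)) ` vecs k"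

end

theory Submission
  imports Defs "HOL-Library.FuncSet" "HOL-Library.Cardinality"
begin

text \<open>
  The columns of the generator matrix are the points of the projective space of \<open>F\<^sub>q\<^sup>k\<close> off the
  \<open>h\<close> pairwise disjoint subspaces \<open>U\<^sub>i\<close>. For a subspace \<open>X\<close> of messages, a column lies outside the
  support of the subcode encoded by \<open>X\<close> exactly when it is orthogonal to \<open>X\<close>; counting the points of
  \<open>X\<^sup>\<bottom> = orth {..<k} X\<close> off the blocks gives
  \<open>(q - 1) |supp| = q ^ k - |X\<^sup>\<bottom>| - (\<Sum>i. q ^ u - |X\<^sup>\<bottom> \<inter> U\<^sub>i|)\<close>,
  and the dualities \<open>|X| |X\<^sup>\<bottom>| = q ^ k\<close> and \<open>|\<pi>\<^sub>i X| |X\<^sup>\<bottom> \<inter> U\<^sub>i| = q ^ u\<close>, with \<open>\<pi>\<^sub>i\<close> the projection to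
  the \<open>i\<close>-th block, evaluate the right-hand side. For \<open>X = \<langle>x\<rangle>\<close> this is the weight
  \<open>q ^ (k - 1) - j q ^ (u - 1)\<close>, where \<open>j\<close> is the number of blocks on which \<open>x\<close> is nonzero, and counting
  messages block by block gives the weight distribution. For \<open>dim X = r\<close> one has
  \<open>|X\<^sup>\<bottom> \<inter> U\<^sub>i| \<ge> q ^ (u - min r u)\<close>, with equality for an explicit \<open>X\<close>, which gives the generalized
  Hamming weights. Distance optimality follows from the Griesmer bound: the condition on the least
  nonzero digit of \<open>h\<close> makes the length smaller than the Griesmer sum for \<open>d + 1\<close>.
\<close>

section \<open>Coordinate spaces and duality\<close>

definition coord_space :: "nat set \<Rightarrow> (nat \<Rightarrow> 'a::zero) set" where
  "coord_space I = {v. \<forall>j. j \<notin> I \<longrightarrow> v j = 0}"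

definition coord_proj :: "nat set \<Rightarrow> (nat \<Rightarrow> 'a::zero) \<Rightarrow> (nat \<Rightarrow> 'a)" where
  "coord_proj I x = (\<lambda>j. if j \<in> I then x j else 0)"

definition weight_on :: "nat set \<Rightarrow> (nat \<Rightarrow> 'a::zero) \<Rightarrow> nat" where
  "weight_on J c = card {j\<in>J. c j \<noteq> 0}"

definition is_subspace :: "(nat \<Rightarrow> 'a::field) set \<Rightarrow> bool" where
  "is_subspace X \<longleftrightarrow> (\<lambda>_. 0) \<in> X \<and> (\<forall>x\<in>X. \<forall>y\<in>X. (\<lambda>i. x i + y i) \<in> X) \<and>
     (\<forall>a. \<forall>x\<in>X. (\<lambda>i. a * x i) \<in> X)"

definition lin_map :: "((nat \<Rightarrow> 'a::field) \<Rightarrow> (nat \<Rightarrow> 'a)) \<Rightarrow> bool" where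
  "lin_map L \<longleftrightarrow> (\<forall>x y. L (\<lambda>i. x i + y i) = (\<lambda>i. L x i + L y i)) \<and>
     (\<forall>a x. L (\<lambda>i. a * x i) = (\<lambda>i. a * L x i))"

definition line :: "(nat \<Rightarrow> 'a::field) \<Rightarrow> (nat \<Rightarrow> 'a) set" where
  "line x = range (\<lambda>l i. l * x i)"

definition dot :: "nat set \<Rightarrow> (nat \<Rightarrow> 'a::field) \<Rightarrow> (nat \<Rightarrow> 'a) \<Rightarrow> 'a" where
  "dot I x v = (\<Sum>j\<in>I. x j * v j)"

definition orth :: "nat set \<Rightarrow> (nat \<Rightarrow> 'a::field) set \<Rightarrow> (nat \<Rightarrow> 'a) set" where
  "orth I X = {v \<in> coord_space I. \<forall>x\<in>X. dot I x v = 0}"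

lemma CARD_field_ge_2: "2 \<le> CARD('a::{finite,field})"
proof -
  have "card {0::'a, 1} \<le> CARD('a)" by (rule card_mono) auto
  then show ?thesis by simp
qed

lemma vecs_eq_coord_space: "vecs n = coord_space {..<n}"
  by (auto simp: vecs_def coord_space_def)

lemma zero_in_coord_space [simp]: "(\<lambda>_. 0) \<in> coord_space I"
  by (simp add: coord_space_def)

lemma coord_proj_in_coord_space [simp]: "coord_proj I x \<in> coord_space I"
  by (simp add: coord_proj_def coord_space_def)

lemma coord_proj_id: "x \<in> coord_space I \<Longrightarrow> coord_proj I x = x"
  by (auto simp: coord_proj_def coord_space_def)

lemma coord_proj_coord_proj: "I \<subseteq> J \<Longrightarrow> coord_proj I (coord_proj J x) = coord_proj I x"
  by (auto simp: coord_proj_def fun_eq_iff)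

lemma
  assumes "finite I"
  shows finite_coord_space: "finite (coord_space I :: (nat \<Rightarrow> 'a::{finite,zero}) set)"
    and card_coord_space: "card (coord_space I :: (nat \<Rightarrow> 'a::{finite,zero}) set) = CARD('a) ^ card I"
proof -
  have bij: "bij_betw (\<lambda>v. restrict v I) (coord_space I :: (nat \<Rightarrow> 'a) set) (PiE I (\<lambda>_. UNIV))"
    by (rule bij_betwI[where g = "\<lambda>f j. if j \<in> I then f j else 0"])
      (auto simp: coord_space_def fun_eq_iff PiE_def extensional_def)
  show "finite (coord_space I :: (nat \<Rightarrow> 'a) set)"
    using bij_betw_finite[OF bij] assms by (simp add: finite_PiE)
  show "card (coord_space I :: (nat \<Rightarrow> 'a) set) = CARD('a) ^ card I"
    using bij_betw_same_card[OF bij] assms by (simp add: card_PiE)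
qed

lemma card_coord_space_nonzero:
  "finite I \<Longrightarrow> card (coord_space I - {\<lambda>_. 0} :: (nat \<Rightarrow> 'a::{finite,zero}) set) = CARD('a) ^ card I - 1"
  by (simp add: card_Diff_singleton card_coord_space)

lemma card_coord_space_Un:
  fixes P Q :: "(nat \<Rightarrow> 'a::monoid_add) \<Rightarrow> bool"
  assumes "finite A" "finite B" "A \<inter> B = {}"
  shows "card {x \<in> coord_space (A \<union> B). P (coord_proj A x) \<and> Q (coord_proj B x)}
    = card {y \<in> coord_space A. P y} * card {z \<in> coord_space B. Q z}"
proof -
  let ?S = "{x \<in> coord_space (A \<union> B). P (coord_proj A x) \<and> Q (coord_proj B x)}"
  let ?T = "{y \<in> coord_space A. P y} \<times> {z \<in> coord_space B. Q z}"
  have proj_sum: "coord_proj A (\<lambda>i. y i + z i) = y" "coord_proj B (\<lambda>i. y i + z i) = z"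
    if "y \<in> coord_space A" "z \<in> coord_space B" for y z :: "nat \<Rightarrow> 'a"
    using that assms(3) by (auto simp: coord_proj_def coord_space_def fun_eq_iff)
  have "bij_betw (\<lambda>x. (coord_proj A x, coord_proj B x)) ?S ?T"
  proof (rule bij_betwI[where g = "\<lambda>p i. fst p i + snd p i"])
    show "(\<lambda>p i. fst p i + snd p i) \<in> ?T \<rightarrow> ?S"
      using proj_sum by (auto simp: coord_space_def)
    show "(coord_proj A (\<lambda>i. fst p i + snd p i), coord_proj B (\<lambda>i. fst p i + snd p i)) = p"
      if "p \<in> ?T" for p
      using that proj_sum by (cases p) auto
  qed (use assms(3) in \<open>auto simp: coord_proj_def coord_space_def fun_eq_iff\<close>)
  then show ?thesis
    by (simp add: bij_betw_same_card card_cartesian_product)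
qed

lemma is_subspace_zero: "is_subspace X \<Longrightarrow> (\<lambda>_. 0) \<in> X"
  and is_subspace_add: "is_subspace X \<Longrightarrow> x \<in> X \<Longrightarrow> y \<in> X \<Longrightarrow> (\<lambda>i. x i + y i) \<in> X"
  and is_subspace_smult: "is_subspace X \<Longrightarrow> x \<in> X \<Longrightarrow> (\<lambda>i. a * x i) \<in> X"
  by (auto simp: is_subspace_def)

lemma is_subspace_diff:
  assumes "is_subspace X" "x \<in> X" "y \<in> X"
  shows "(\<lambda>i. x i - y i) \<in> X"
  using is_subspace_add[OF assms(1,2) is_subspace_smult[OF assms(1,3), of "-1"]] by simp

lemma is_subspace_coord_space: "is_subspace (coord_space I)"
  by (auto simp: is_subspace_def coord_space_def)

lemma lin_code_iff: "lin_code n C \<longleftrightarrow> C \<subseteq> vecs n \<and> is_subspace C"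
  by (auto simp: lin_code_def is_subspace_def)

lemma lin_map_add: "lin_map L \<Longrightarrow> L (\<lambda>i. x i + y i) = (\<lambda>i. L x i + L y i)"
  and lin_map_smult: "lin_map L \<Longrightarrow> L (\<lambda>i. a * x i) = (\<lambda>i. a * L x i)"
  by (simp_all add: lin_map_def)

lemma lin_map_zero: "lin_map L \<Longrightarrow> L (\<lambda>_. 0) = (\<lambda>_. 0)"
  using lin_map_smult[of L 0 "\<lambda>_. 0"] by simp

lemma lin_map_diff: "lin_map L \<Longrightarrow> L (\<lambda>i. x i - y i) = (\<lambda>i. L x i - L y i)"
  using lin_map_add[of L x "\<lambda>i. -1 * y i"] lin_map_smult[of L "-1" y] by simp

lemma lin_map_comp: "lin_map L \<Longrightarrow> lin_map M \<Longrightarrow> lin_map (L \<circ> M)"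
  by (simp add: lin_map_def)

lemma lin_map_coord_proj: "lin_map (coord_proj I)"
  by (auto simp: lin_map_def coord_proj_def fun_eq_iff)

lemma is_subspace_image:
  assumes "lin_map L" "is_subspace X"
  shows "is_subspace (L ` X)"
  unfolding is_subspace_def
proof (intro conjI ballI allI)
  show "(\<lambda>_. 0) \<in> L ` X"
    using lin_map_zero[OF assms(1)] is_subspace_zero[OF assms(2)] by (metis image_eqI)
  show "(\<lambda>i. y i + z i) \<in> L ` X" if "y \<in> L ` X" "z \<in> L ` X" for y z
  proof -
    from that obtain a b where "a \<in> X" "b \<in> X" "y = L a" "z = L b" by auto
    then show ?thesis
      using lin_map_add[OF assms(1), of a b] is_subspace_add[OF assms(2)] by (metis image_eqI)
  qed
  show "(\<lambda>i. c * y i) \<in> L ` X" if "y \<in> L ` X" for c y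
  proof -
    from that obtain a where "a \<in> X" "y = L a" by auto
    then show ?thesis
      using lin_map_smult[OF assms(1), of c a] is_subspace_smult[OF assms(2)] by (metis image_eqI)
  qed
qed

lemma is_subspace_preimage:
  assumes "lin_map L" "is_subspace D" "L (\<lambda>_. 0) \<in> D"
  shows "is_subspace {x \<in> coord_space I. L x \<in> D}"
  using assms is_subspace_coord_space[of I]
  by (auto simp: is_subspace_def lin_map_add lin_map_smult)

lemma in_line: "x \<in> line x"
  unfolding line_def by (rule range_eqI[where x = 1]) simp

lemma line_zero: "line (\<lambda>_. 0) = {\<lambda>_. 0}"
  by (auto simp: line_def)

lemma line_subset_coord_space: "x \<in> coord_space I \<Longrightarrow> line x \<subseteq> coord_space I"
  by (auto simp: line_def coord_space_def)

lemma image_coord_proj_line: "coord_proj I ` line x = line (coord_proj I x)"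
  by (auto simp: line_def coord_proj_def image_def fun_eq_iff)

lemma card_line:
  assumes "x \<noteq> (\<lambda>_. 0)"
  shows "card (line x :: (nat \<Rightarrow> 'a::{finite,field}) set) = CARD('a)"
proof -
  obtain j where "x j \<noteq> 0" using assms by auto
  then have "inj (\<lambda>l i. l * x i)"
    by (intro injI) (metis mult_cancel_right)
  then show ?thesis by (simp add: line_def card_image)
qed

lemma is_subspace_line: "is_subspace (line x)"
  unfolding is_subspace_def line_def
proof (intro conjI ballI allI)
  show "(\<lambda>_. 0) \<in> range (\<lambda>l i. l * x i)" by (rule range_eqI[where x = 0]) simp
  fix y z assume "y \<in> range (\<lambda>l i. l * x i)" "z \<in> range (\<lambda>l i. l * x i)"
  then obtain s t where "y = (\<lambda>i. s * x i)" "z = (\<lambda>i. t * x i)" by auto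
  then show "(\<lambda>i. y i + z i) \<in> range (\<lambda>l i. l * x i)"
    by (intro range_eqI[where x = "s + t"]) (simp add: distrib_right)
next
  fix a y assume "y \<in> range (\<lambda>l i. l * x i)"
  then obtain s where "y = (\<lambda>i. s * x i)" by auto
  then show "(\<lambda>i. a * y i) \<in> range (\<lambda>l i. l * x i)"
    by (intro range_eqI[where x = "a * s"]) (simp add: mult.assoc)
qed

lemma dot_add_right: "dot I x (\<lambda>i. v i + w i) = dot I x v + dot I x w"
  and dot_smult_right: "dot I x (\<lambda>i. a * v i) = a * dot I x v"
  and dot_add_left: "dot I (\<lambda>i. v i + w i) x = dot I v x + dot I w x"
  and dot_smult_left: "dot I (\<lambda>i. a * v i) x = a * dot I v x"
  by (simp_all add: dot_def algebra_simps sum.distrib sum_distrib_left)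

lemma card_subspace_image_kernel:
  assumes "finite S" "is_subspace S"
    and fibres: "\<And>s t. s \<in> S \<Longrightarrow> t \<in> S \<Longrightarrow> g s = g t \<longleftrightarrow> g (\<lambda>i. s i - t i) = z"
  shows "card S = card (g ` S) * card {s \<in> S. g s = z}"
proof -
  let ?K = "{s \<in> S. g s = z}"
  have "card {s \<in> S. g s = y} = card ?K" if "y \<in> g ` S" for y
  proof -
    from that obtain s0 where s0: "s0 \<in> S" "g s0 = y" by auto
    have "bij_betw (\<lambda>s i. s i - s0 i) {s \<in> S. g s = y} ?K"
    proof (rule bij_betwI[where g = "\<lambda>s i. s i + s0 i"])
      show "(\<lambda>s i. s i - s0 i) \<in> {s \<in> S. g s = y} \<rightarrow> ?K"
        using s0 fibres is_subspace_diff[OF assms(2)] by auto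
      have "g (\<lambda>i. s i + s0 i) = y" if "s \<in> ?K" for s
        using that s0 fibres[of "\<lambda>i. s i + s0 i" s0] is_subspace_add[OF assms(2)] by simp
      then show "(\<lambda>s i. s i + s0 i) \<in> ?K \<rightarrow> {s \<in> S. g s = y}"
        using s0 is_subspace_add[OF assms(2)] by auto
    qed auto
    then show ?thesis by (rule bij_betw_same_card)
  qed
  moreover have "card S = (\<Sum>y\<in>g ` S. card {s \<in> S. g s = y})"
  proof -
    have "S = (\<Union>y\<in>g ` S. {s \<in> S. g s = y})" by auto
    also have "card \<dots> = (\<Sum>y\<in>g ` S. card {s \<in> S. g s = y})"
      using assms(1) by (intro card_UN_disjoint) auto
    finally show ?thesis .
  qed
  ultimately show ?thesis by simp
qed

lemma card_subspace_kernel_functional: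
  fixes S :: "(nat \<Rightarrow> 'a::{finite,field}) set"
  assumes "finite S" "is_subspace S"
    and add: "\<And>s t. s \<in> S \<Longrightarrow> t \<in> S \<Longrightarrow> f (\<lambda>i. s i + t i) = f s + f t"
    and smult: "\<And>a s. s \<in> S \<Longrightarrow> f (\<lambda>i. a * s i) = a * f s"
    and "w \<in> S" "f w \<noteq> 0"
  shows "card S = CARD('a) * card {s \<in> S. f s = 0}"
proof -
  have "f (\<lambda>i. s i - t i) = f s - f t" if "s \<in> S" "t \<in> S" for s t
    using add[OF that(1) is_subspace_smult[OF assms(2) that(2), of "-1"]] smult[OF that(2), of "-1"]
    by simp
  moreover have "f ` S = UNIV"
  proof (intro set_eqI iffI)
    fix c :: 'a
    have "f (\<lambda>i. (c / f w) * w i) = (c / f w) * f w"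
      by (rule smult[OF assms(5)])
    then have "f (\<lambda>i. (c / f w) * w i) = c"
      using assms(6) by simp
    then show "c \<in> f ` S"
      using is_subspace_smult[OF assms(2,5)] by (metis image_eqI)
  qed auto
  ultimately show ?thesis
    using card_subspace_image_kernel[OF assms(1,2), of f 0] by simp
qed

lemma card_orth_point:
  fixes x :: "nat \<Rightarrow> 'a::{finite,field}"
  assumes "finite I" "x \<in> coord_space I" "x \<noteq> (\<lambda>_. 0)"
  shows "CARD('a) * card {v \<in> coord_space I. dot I x v = 0} = CARD('a) ^ card I"
proof -
  obtain j where j: "x j \<noteq> 0" using assms(3) by auto
  then have "j \<in> I" using assms(2) by (auto simp: coord_space_def)
  define e where "e = (\<lambda>i. if i = j then 1 else 0 :: 'a)"
  have "e \<in> coord_space I" "dot I x e \<noteq> 0"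
    using \<open>j \<in> I\<close> assms(1) j by (auto simp: e_def coord_space_def dot_def if_distrib cong: if_cong)
  then have "card (coord_space I :: (nat \<Rightarrow> 'a) set) = CARD('a) * card {v \<in> coord_space I. dot I x v = 0}"
    using card_subspace_kernel_functional[OF finite_coord_space[OF assms(1)] is_subspace_coord_space,
        where f = "dot I x"]
    by (simp add: dot_add_right dot_smult_right)
  then show ?thesis using card_coord_space[OF assms(1), where 'a = 'a] by simp
qed

lemma card_subspace_orth_point:
  fixes X :: "(nat \<Rightarrow> 'a::{finite,field}) set"
  assumes "finite X" "is_subspace X" "x0 \<in> X" "dot I x0 v \<noteq> 0"
  shows "CARD('a) * card {x \<in> X. dot I x v = 0} = card X"
  using card_subspace_kernel_functional[OF assms(1,2), of "\<lambda>x. dot I x v", OF _ _ assms(3,4)]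
  by (simp add: dot_add_left dot_smult_left)

lemma card_filter_eq_sum_of_bool: "finite A \<Longrightarrow> card {x \<in> A. P x} = (\<Sum>x\<in>A. of_bool (P x))"
  by (simp add: Collect_conj_eq Int_commute)

lemma sum_card_orth_point:
  fixes X :: "(nat \<Rightarrow> 'a::{finite,field}) set"
  assumes I: "finite I" and X: "X \<subseteq> coord_space I" "finite X" "(\<lambda>_. 0) \<in> X"
  shows "CARD('a) * (\<Sum>x\<in>X. card {v \<in> coord_space I. dot I x v = 0})
    = CARD('a) * CARD('a) ^ card I + (card X - 1) * CARD('a) ^ card I"
proof -
  let ?N = "CARD('a) ^ card I" and ?z = "\<lambda>_. 0 :: 'a"
  have "CARD('a) * card {v \<in> coord_space I. dot I x v = 0} = ?N" if "x \<in> X - {?z}" for x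
    using that X(1) card_orth_point[OF I] by auto
  then have "CARD('a) * (\<Sum>x\<in>X - {?z}. card {v \<in> coord_space I. dot I x v = 0}) = (card X - 1) * ?N"
    using X(2,3) by (simp add: sum_distrib_left card_Diff_singleton)
  moreover have "card {v \<in> coord_space I :: (nat \<Rightarrow> 'a) set. dot I ?z v = 0} = ?N"
    using card_coord_space[OF I, where 'a = 'a] by (simp add: dot_def)
  ultimately show ?thesis
    using X(2,3) by (simp add: sum.remove[of X ?z] distrib_left)
qed

lemma sum_card_subspace_orth_point:
  fixes X :: "(nat \<Rightarrow> 'a::{finite,field}) set"
  assumes I: "finite I" and X: "finite X" "is_subspace X"
  shows "CARD('a) * (\<Sum>v\<in>coord_space I. card {x \<in> X. dot I x v = 0})
    = CARD('a) * card (orth I X) * card X + (CARD('a) ^ card I - card (orth I X)) * card X"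
proof -
  let ?V = "coord_space I :: (nat \<Rightarrow> 'a) set" and ?Y = "orth I X"
  have finV: "finite ?V" by (rule finite_coord_space[OF I])
  have Y: "?Y \<subseteq> ?V" "finite ?Y" using finV by (auto simp: orth_def)
  have "CARD('a) * card {x \<in> X. dot I x v = 0} = card X" if "v \<in> ?V - ?Y" for v
    using that card_subspace_orth_point[OF X] by (auto simp: orth_def)
  then have "CARD('a) * (\<Sum>v\<in>?V - ?Y. card {x \<in> X. dot I x v = 0}) = (CARD('a) ^ card I - card ?Y) * card X"
    using Y card_coord_space[OF I, where 'a = 'a] by (simp add: sum_distrib_left card_Diff_subset)
  moreover have "card {x \<in> X. dot I x v = 0} = card X" if "v \<in> ?Y" for v
    using that by (auto simp: orth_def intro!: arg_cong[where f = card])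
  ultimately show ?thesis
    by (simp add: sum.subset_diff[OF Y(1) finV] distrib_left)
qed

text \<open>The duality \<open>|X| |X\<^sup>\<bottom>| = q ^ card I\<close> is obtained by counting the pairs \<open>(x, v)\<close> with \<open>x \<in> X\<close>
  and \<open>x \<cdot> v = 0\<close> in two ways, using that a nonzero linear functional has \<open>1/q\<close> of its domain as kernel.\<close>

lemma card_subspace_mult_card_orth:
  fixes X :: "(nat \<Rightarrow> 'a::{finite,field}) set"
  assumes I: "finite I" and X: "X \<subseteq> coord_space I" "is_subspace X"
  shows "card X * card (orth I X) = CARD('a) ^ card I"
proof -
  let ?q = "CARD('a)" and ?V = "coord_space I :: (nat \<Rightarrow> 'a) set" and ?N = "CARD('a) ^ card I"
  let ?Y = "orth I X"
  have finV: "finite ?V" by (rule finite_coord_space[OF I])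
  have finX: "finite X" using finite_subset[OF X(1) finV] .
  have zX: "(\<lambda>_. 0) \<in> X" using is_subspace_zero[OF X(2)] .
  have "(\<Sum>x\<in>X. card {v \<in> ?V. dot I x v = 0}) = (\<Sum>v\<in>?V. card {x \<in> X. dot I x v = 0})"
    using finX finV by (simp only: card_filter_eq_sum_of_bool sum.swap[of _ X ?V])
  then have "?q * ?N + (card X - 1) * ?N = ?q * card ?Y * card X + (?N - card ?Y) * card X"
    using sum_card_orth_point[OF I X(1) finX zX] sum_card_subspace_orth_point[OF I finX X(2)] by simp
  moreover have "1 \<le> card X" "card ?Y \<le> ?N"
    using finX zX card_mono[OF finV, of ?Y] card_coord_space[OF I, where 'a = 'a]
    by (auto simp: Suc_le_eq card_gt_0_iff orth_def)
  ultimately have "int ?q * int ?N + (int (card X) - 1) * int ?N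
      = int ?q * int (card ?Y) * int (card X) + (int ?N - int (card ?Y)) * int (card X)"
    by (metis (no_types) of_nat_add of_nat_diff of_nat_mult of_nat_1)
  then have "(int ?q - 1) * (int ?N - int (card X) * int (card ?Y)) = 0"
    by (simp add: algebra_simps)
  then have "int ?N = int (card X) * int (card ?Y)"
    using CARD_field_ge_2[where 'a = 'a] by simp
  then show ?thesis by (metis of_nat_eq_iff of_nat_mult)
qed

lemma lin_map_sum:
  fixes x :: "nat \<Rightarrow> nat \<Rightarrow> 'a::field" and r :: nat
  assumes "lin_map L"
  shows "L (\<lambda>i. \<Sum>t<r. a t * x t i) = (\<lambda>i. \<Sum>t<r. a t * L (x t) i)"
proof (induction r)
  case 0
  then show ?case using lin_map_zero[OF assms] by simp
next
  case (Suc r)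
  then show ?case
    using lin_map_add[OF assms, of "\<lambda>i. \<Sum>t<r. a t * x t i" "\<lambda>i. a r * x r i"]
      lin_map_smult[OF assms, of "a r" "x r"]
    by simp
qed

lemma coord_space_sum_unit_vectors:
  fixes a :: "nat \<Rightarrow> 'a::semiring_1"
  assumes "a \<in> coord_space {..<r}"
  shows "a = (\<lambda>i. \<Sum>t<r. a t * (if i = t then 1 else 0))"
proof -
  have "a t * (if i = t then 1 else 0) = (if i = t then a t else 0)" for t i by simp
  then show ?thesis using assms by (auto simp: coord_space_def fun_eq_iff sum.delta')
qed

lemma has_dim_image:
  assumes lin: "lin_map L" and inj: "inj_on L (coord_space {..<r})"
  shows "has_dim (L ` coord_space {..<r}) r"
  unfolding has_dim_def
proof (intro exI conjI)
  define e where "e t = (\<lambda>i::nat. if i = t then 1 else 0 :: 'a)" for t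
  let ?bs = "map (\<lambda>t. L (e t)) [0..<r]"
  have lin_comb_eq: "lin_comb ?bs a = L (coord_proj {..<r} a)" for a
  proof -
    have "L (coord_proj {..<r} a) = L (\<lambda>i. \<Sum>t<r. coord_proj {..<r} a t * e t i)"
      using coord_space_sum_unit_vectors[OF coord_proj_in_coord_space, of r a] by (simp add: e_def)
    also have "\<dots> = (\<lambda>i. \<Sum>t<r. coord_proj {..<r} a t * L (e t) i)"
      by (rule lin_map_sum[OF lin])
    also have "\<dots> = lin_comb ?bs a"
      unfolding lin_comb_def by (intro ext sum.cong) (simp_all add: coord_proj_def)
    finally show ?thesis by simp
  qed
  show "length ?bs = r" by simp
  show "L ` coord_space {..<r} = range (lin_comb ?bs)"
  proof
    show "L ` coord_space {..<r} \<subseteq> range (lin_comb ?bs)"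
      using lin_comb_eq coord_proj_id by (metis image_subsetI rangeI)
    show "range (lin_comb ?bs) \<subseteq> L ` coord_space {..<r}"
      using lin_comb_eq by auto
  qed
  show "lin_indep ?bs"
    unfolding lin_indep_def
  proof (intro allI impI)
    fix a j assume "lin_comb ?bs a = (\<lambda>i. 0)" "j < length ?bs"
    then have "L (coord_proj {..<r} a) = L (\<lambda>_. 0)"
      using lin_comb_eq lin_map_zero[OF lin] by simp
    then have "coord_proj {..<r} a = (\<lambda>_. 0)"
      using inj by (auto dest: inj_onD)
    then show "a j = 0" using \<open>j < length ?bs\<close> by (simp add: coord_proj_def fun_eq_iff) metis
  qed
qed

lemma
  fixes C :: "(nat \<Rightarrow> 'a::{finite,field}) set"
  assumes "has_dim C r"
  shows card_has_dim: "card C = CARD('a) ^ r" and finite_has_dim: "finite C"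
proof -
  obtain bs where bs: "length bs = r" "lin_indep bs" "C = range (lin_comb bs)"
    using assms by (auto simp: has_dim_def)
  have "lin_comb bs a = lin_comb bs (coord_proj {..<r} a)" for a
    by (auto simp: lin_comb_def coord_proj_def bs(1) intro!: sum.cong)
  then have C_eq: "C = lin_comb bs ` coord_space {..<r}"
    using bs(3) coord_proj_in_coord_space by blast
  have "inj_on (lin_comb bs) (coord_space {..<r})"
  proof (rule inj_onI)
    fix a b assume ab: "a \<in> coord_space {..<r}" "b \<in> coord_space {..<r}" "lin_comb bs a = lin_comb bs b"
    then have "lin_comb bs (\<lambda>j. a j - b j) = (\<lambda>_. 0)"
      by (simp add: lin_comb_def left_diff_distrib sum_subtractf fun_eq_iff)
    then have "\<forall>j<r. a j = b j" using bs(1,2) by (auto simp: lin_indep_def)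
    then show "a = b" using ab(1,2) by (auto simp: coord_space_def fun_eq_iff) (metis not_less)
  qed
  then show "card C = CARD('a) ^ r"
    using C_eq card_image[of "lin_comb bs"] card_coord_space[of "{..<r}", where 'a = 'a] by simp
  show "finite C" using C_eq finite_coord_space[of "{..<r}", where 'a = 'a] by simp
qed

lemma card_orth_eq:
  fixes X :: "(nat \<Rightarrow> 'a::{finite,field}) set"
  assumes "finite I" "X \<subseteq> coord_space I" "is_subspace X" "card X = CARD('a) ^ r" "r \<le> card I"
  shows "card (orth I X) = CARD('a) ^ (card I - r)"
proof -
  have "CARD('a) ^ r * card (orth I X) = CARD('a) ^ r * CARD('a) ^ (card I - r)"
    using card_subspace_mult_card_orth[OF assms(1-3)] assms(4,5) by (simp flip: power_add)
  then show ?thesis by simp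
qed

section \<open>The Griesmer bound\<close>

definition ceil_div :: "nat \<Rightarrow> nat \<Rightarrow> nat" where
  "ceil_div a b = (a + b - 1) div b"

lemma ceil_div_le_iff: "0 < b \<Longrightarrow> ceil_div a b \<le> m \<longleftrightarrow> a \<le> m * b"
  unfolding ceil_div_def by (simp add: less_Suc_eq_le[symmetric] div_less_iff_less_mult) linarith

lemma le_ceil_div_mult: "0 < b \<Longrightarrow> a \<le> ceil_div a b * b"
  using ceil_div_le_iff[of b a "ceil_div a b"] by simp

lemma ceil_div_pos: "0 < a \<Longrightarrow> 0 < b \<Longrightarrow> 0 < ceil_div a b"
  using ceil_div_le_iff[of b a 0] by simp

lemma ceil_div_mono: "a \<le> a' \<Longrightarrow> ceil_div a b \<le> ceil_div a' b"
  unfolding ceil_div_def by (intro div_le_mono) simp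

lemma ceil_div_ceil_div: "0 < a \<Longrightarrow> 0 < b \<Longrightarrow> ceil_div (ceil_div d a) b = ceil_div d (a * b)"
proof -
  assume "0 < a" "0 < b"
  then have "ceil_div (ceil_div d a) b \<le> m \<longleftrightarrow> ceil_div d (a * b) \<le> m" for m
    by (simp add: ceil_div_le_iff ac_simps)
  then show ?thesis by (metis le_antisym order_refl)
qed

lemma card_nonzero_shifts:
  fixes y c :: "'a::{finite,field}"
  shows "card {l. y \<noteq> l * c} = (if c \<noteq> 0 then CARD('a) - 1 else if y \<noteq> 0 then CARD('a) else 0)"
proof (cases "c = 0")
  case False
  then have "{l. y \<noteq> l * c} = UNIV - {y / c}" by (auto simp: field_simps)
  then show ?thesis using False by (simp add: card_Diff_singleton)
qed simp

lemma sum_weight_on_shifts: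
  fixes x c :: "nat \<Rightarrow> 'a::{finite,field}"
  assumes "finite J"
  shows "(\<Sum>l\<in>UNIV. weight_on J (\<lambda>i. x i - l * c i))
    = (CARD('a) - 1) * weight_on J c + CARD('a) * weight_on {j\<in>J. c j = 0} x"
proof -
  let ?q = "CARD('a)"
  have "(\<Sum>l\<in>UNIV. weight_on J (\<lambda>i. x i - l * c i)) = (\<Sum>j\<in>J. card {l \<in> UNIV. x j - l * c j \<noteq> 0})"
    using assms by (simp only: weight_on_def card_filter_eq_sum_of_bool finite sum.swap[of _ UNIV J])
  also have "\<dots> = (\<Sum>j\<in>J. (?q - 1) * of_bool (c j \<noteq> 0) + ?q * of_bool (c j = 0 \<and> x j \<noteq> 0))"
    by (intro sum.cong) (simp_all add: card_nonzero_shifts)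
  also have "\<dots> = (?q - 1) * weight_on J c + ?q * weight_on {j\<in>J. c j = 0} x"
    using assms by (simp add: sum.distrib weight_on_def card_filter_eq_sum_of_bool sum_distrib_left)
  finally show ?thesis .
qed

lemma min_weight_le_residual_weight:
  fixes C :: "(nat \<Rightarrow> 'a::{finite,field}) set"
  assumes "finite J" "is_subspace C" "c \<in> C"
    and min: "\<And>y. y \<in> C \<Longrightarrow> y \<noteq> (\<lambda>_. 0) \<Longrightarrow> weight_on J c \<le> weight_on J y"
    and "x \<in> C" "x \<notin> line c"
  shows "weight_on J c \<le> CARD('a) * weight_on {j\<in>J. c j = 0} x"
proof -
  let ?q = "CARD('a)"
  have shift: "weight_on J c \<le> weight_on J (\<lambda>i. x i - l * c i)" for l
  proof (rule min)
    show "(\<lambda>i. x i - l * c i) \<in> C"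
      using is_subspace_diff[OF assms(2,5) is_subspace_smult[OF assms(2,3)]] .
    show "(\<lambda>i. x i - l * c i) \<noteq> (\<lambda>_. 0)"
      using \<open>x \<notin> line c\<close> by (auto simp: line_def fun_eq_iff)
  qed
  have "(\<Sum>l\<in>(UNIV :: 'a set). weight_on J c) \<le> (\<Sum>l\<in>UNIV. weight_on J (\<lambda>i. x i - l * c i))"
    by (rule sum_mono) (rule shift)
  then have "?q * weight_on J c \<le> (?q - 1) * weight_on J c + ?q * weight_on {j\<in>J. c j = 0} x"
    using sum_weight_on_shifts[OF assms(1), of x c] by simp
  moreover have "?q * weight_on J c = (?q - 1) * weight_on J c + weight_on J c"
    using CARD_field_ge_2[where 'a = 'a] by (cases ?q) auto
  ultimately show ?thesis by linarith
qed

text \<open>Let \<open>c\<close> be a codeword of minimum weight. The residual code, obtained by deleting the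
  support of \<open>c\<close>, loses only the multiples of \<open>c\<close>, and its weights are at least \<open>w(c)/q\<close>.\<close>

lemma coord_proj_residual_eq_0_iff:
  fixes C :: "(nat \<Rightarrow> 'a::{finite,field}) set"
  assumes J: "finite J" and C: "C \<subseteq> coord_space J" "is_subspace C"
    and c: "c \<in> C" "c \<noteq> (\<lambda>_. 0)"
    and min: "\<And>y. y \<in> C \<Longrightarrow> y \<noteq> (\<lambda>_. 0) \<Longrightarrow> weight_on J c \<le> weight_on J y"
    and "x \<in> C"
  shows "coord_proj {j\<in>J. c j = 0} x = (\<lambda>_. 0) \<longleftrightarrow> x \<in> line c"
proof
  let ?J' = "{j\<in>J. c j = 0}"
  assume x: "coord_proj ?J' x = (\<lambda>_. 0)"
  show "x \<in> line c"
  proof (rule ccontr)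
    assume "x \<notin> line c"
    then have "weight_on J c \<le> CARD('a) * weight_on ?J' x"
      using min_weight_le_residual_weight[OF J C(2) c(1) min \<open>x \<in> C\<close>] by simp
    moreover have "x j = 0" if "j \<in> ?J'" for j
      using fun_cong[OF x, of j] that by (simp add: coord_proj_def)
    then have "{j \<in> ?J'. x j \<noteq> 0} = {}" by blast
    then have "weight_on ?J' x = 0" unfolding weight_on_def by (simp only: card.empty)
    moreover obtain j where "c j \<noteq> 0" using c(2) by auto
    then have "j \<in> {j\<in>J. c j \<noteq> 0}" using c(1) C(1) by (auto simp: coord_space_def)
    then have "0 < weight_on J c" using J by (auto simp: weight_on_def card_gt_0_iff)
    ultimately show False by simp
  qed
qed (auto simp: line_def coord_proj_def fun_eq_iff)

lemma
  fixes C :: "(nat \<Rightarrow> 'a::{finite,field}) set"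
  assumes J: "finite J" and C: "C \<subseteq> coord_space J" "is_subspace C" "card C = CARD('a) ^ Suc k"
    and c: "c \<in> C" "c \<noteq> (\<lambda>_. 0)"
    and min: "\<And>y. y \<in> C \<Longrightarrow> y \<noteq> (\<lambda>_. 0) \<Longrightarrow> weight_on J c \<le> weight_on J y"
  defines "J' \<equiv> {j\<in>J. c j = 0}"
  shows card_residual_code: "card (coord_proj J' ` C) = CARD('a) ^ k"
    and residual_weight_ge: "\<And>y. y \<in> coord_proj J' ` C \<Longrightarrow> y \<noteq> (\<lambda>_. 0) \<Longrightarrow>
      ceil_div (weight_on J c) CARD('a) \<le> weight_on J' y"
proof -
  have finC: "finite C" using finite_subset[OF C(1) finite_coord_space[OF J]] .
  have kernel: "x \<in> C \<Longrightarrow> coord_proj J' x = (\<lambda>_. 0) \<longleftrightarrow> x \<in> line c" for x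
    unfolding J'_def by (rule coord_proj_residual_eq_0_iff[OF J C(1,2) c min])
  have "coord_proj J' s = coord_proj J' t \<longleftrightarrow> coord_proj J' (\<lambda>i. s i - t i) = (\<lambda>_. 0)" for s t :: "nat \<Rightarrow> 'a"
    by (simp add: lin_map_diff[OF lin_map_coord_proj] fun_eq_iff)
  moreover have "{x \<in> C. coord_proj J' x = (\<lambda>_. 0)} = line c"
    using kernel is_subspace_smult[OF C(2) c(1)] by (auto simp: line_def)
  ultimately have "card C = card (coord_proj J' ` C) * CARD('a)"
    using card_subspace_image_kernel[OF finC C(2), of "coord_proj J'" "\<lambda>_. 0"] card_line[OF c(2)]
    by simp
  then show "card (coord_proj J' ` C) = CARD('a) ^ k"
    using C(3) CARD_field_ge_2[where 'a = 'a] by simp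
  show "ceil_div (weight_on J c) CARD('a) \<le> weight_on J' y"
    if y: "y \<in> coord_proj J' ` C" "y \<noteq> (\<lambda>_. 0)" for y
  proof -
    obtain x where x: "x \<in> C" "y = coord_proj J' x" using y(1) by blast
    then have "x \<notin> line c" using y(2) kernel by blast
    have "weight_on J c \<le> CARD('a) * weight_on J' x"
      unfolding J'_def by (rule min_weight_le_residual_weight[OF J C(2) c(1) min x(1) \<open>x \<notin> line c\<close>])
    moreover have "weight_on J' y = weight_on J' x"
      using x(2) by (auto simp: weight_on_def coord_proj_def intro: arg_cong[where f = card])
    ultimately show ?thesis
      using CARD_field_ge_2[where 'a = 'a] by (simp add: ceil_div_le_iff mult.commute)
  qed
qed

lemma weight_on_add_card_zeros: "finite J \<Longrightarrow> weight_on J c + card {j\<in>J. c j = 0} = card J"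
  using card_Int_Diff[of J "{j. c j \<noteq> 0}"] by (simp add: weight_on_def Collect_conj_eq set_diff_eq Int_commute add.commute)

definition griesmer_sum :: "nat \<Rightarrow> nat \<Rightarrow> nat \<Rightarrow> nat" where
  "griesmer_sum q k d = (\<Sum>i<k. ceil_div d (q ^ i))"

lemma griesmer_sum_Suc: "0 < q \<Longrightarrow> griesmer_sum q (Suc k) d = d + griesmer_sum q k (ceil_div d q)"
proof -
  assume "0 < q"
  then have "ceil_div d (q ^ Suc i) = ceil_div (ceil_div d q) (q ^ i)" for i
    by (simp add: ceil_div_ceil_div)
  moreover have "ceil_div d 1 = d" by (simp add: ceil_div_def)
  ultimately show ?thesis by (simp only: griesmer_sum_def sum.lessThan_Suc_shift power_0)
qed

lemma griesmer_sum_mono: "d \<le> d' \<Longrightarrow> griesmer_sum q k d \<le> griesmer_sum q k d'"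
  unfolding griesmer_sum_def by (intro sum_mono ceil_div_mono)

theorem griesmer_bound:
  fixes C :: "(nat \<Rightarrow> 'a::{finite,field}) set"
  assumes "finite J" "C \<subseteq> coord_space J" "is_subspace C" "card C = CARD('a) ^ k" "0 < d"
    and "\<And>c. c \<in> C \<Longrightarrow> c \<noteq> (\<lambda>_. 0) \<Longrightarrow> d \<le> weight_on J c"
  shows "griesmer_sum CARD('a) k d \<le> card J"
  using assms
proof (induction k arbitrary: J C d)
  case 0
  then show ?case by (simp add: griesmer_sum_def)
next
  case (Suc k)
  let ?q = "CARD('a)"
  have q: "2 \<le> ?q" by (rule CARD_field_ge_2)
  have "?q ^ 1 \<le> ?q ^ Suc k" using q by (intro power_increasing) auto
  then have "C \<noteq> {\<lambda>_. 0}" using Suc.prems(4) q by auto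
  then obtain c0 where "c0 \<in> C" "c0 \<noteq> (\<lambda>_. 0)"
    using is_subspace_zero[OF Suc.prems(3)] by blast
  then obtain c where c: "c \<in> C" "c \<noteq> (\<lambda>_. 0)"
    and min: "\<And>y. y \<in> C \<Longrightarrow> y \<noteq> (\<lambda>_. 0) \<Longrightarrow> weight_on J c \<le> weight_on J y"
    using ex_has_least_nat[of "\<lambda>y. y \<in> C \<and> y \<noteq> (\<lambda>_. 0)" c0 "weight_on J"] by blast
  define J' where "J' = {j\<in>J. c j = 0}"
  have "d \<le> weight_on J c" using Suc.prems(6) c by blast
  have "griesmer_sum ?q k (ceil_div d ?q) \<le> card J'"
  proof (rule Suc.IH)
    show "finite J'" using Suc.prems(1) by (simp add: J'_def)
    show "coord_proj J' ` C \<subseteq> coord_space J'" by auto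
    show "is_subspace (coord_proj J' ` C)"
      by (rule is_subspace_image[OF lin_map_coord_proj Suc.prems(3)])
    show "card (coord_proj J' ` C) = ?q ^ k"
      unfolding J'_def by (rule card_residual_code[OF Suc.prems(1-4) c min])
    show "0 < ceil_div d ?q" using Suc.prems(5) q by (simp add: ceil_div_pos)
    show "ceil_div d ?q \<le> weight_on J' y" if "y \<in> coord_proj J' ` C" "y \<noteq> (\<lambda>_. 0)" for y
      using ceil_div_mono[OF \<open>d \<le> weight_on J c\<close>]
        residual_weight_ge[OF Suc.prems(1-4) c min that[unfolded J'_def]]
      unfolding J'_def by (rule le_trans)
  qed
  then show ?case
    using griesmer_sum_Suc[of ?q k d] weight_on_add_card_zeros[OF Suc.prems(1), of c] q
      \<open>d \<le> weight_on J c\<close> by (simp add: J'_def)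
qed

section \<open>The Griesmer sum for the parameters of the code\<close>

lemma ceil_div_mult_add_1: "0 < b \<Longrightarrow> ceil_div (m * b + 1) b = m + 1"
  by (simp add: ceil_div_def)

lemma power_dvd_if_le_least_digit_index:
  fixes q h :: nat
  assumes "m \<le> least_digit_index q h"
  shows "q ^ m dvd h"
  using assms
proof (induction m)
  case (Suc m)
  then have "\<not> 0 < h div q ^ m mod q"
    unfolding least_digit_index_def by (intro not_less_Least) simp
  then have "q dvd h div q ^ m" by (simp add: dvd_eq_mod_eq_0)
  moreover have "q ^ m dvd h" using Suc by simp
  ultimately show ?case
    by (metis dvd_div_mult_self mult_dvd_mono power_Suc dvd_refl)
qed simp

lemma least_digit_index_le:
  fixes q h u k :: nat
  assumes "2 \<le> q" "0 < h" "0 < u" "h * u \<le> k"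
  shows "least_digit_index q h \<le> k - u"
proof (rule ccontr)
  let ?m = "k - u + 1"
  assume "\<not> least_digit_index q h \<le> k - u"
  then have "q ^ ?m \<le> h"
    using power_dvd_if_le_least_digit_index[of ?m q h] assms(2) by (simp add: dvd_imp_le)
  moreover have "?m < 2 ^ ?m" by (rule less_exp)
  moreover have "2 ^ ?m \<le> q ^ ?m" using assms(1) by (rule power_mono) simp
  ultimately have "?m * u \<le> (h - 1) * u" by (intro mult_le_mono1) linarith
  also have "\<dots> \<le> k - u" using assms(4) by (simp add: diff_mult_distrib)
  finally show False using assms(3) mult_le_mono2[of 1 u ?m] by simp
qed

lemma pred_div_less_div: "0 < b \<Longrightarrow> b dvd a \<Longrightarrow> 0 < a \<Longrightarrow> (a - 1) div b < a div b"
  for a b :: nat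
  by (rule less_mult_imp_div_less) simp

text \<open>Removing \<open>1\<close> from \<open>h\<close> lowers \<open>h div q ^ i\<close> for every \<open>i\<close> up to the least nonzero digit of \<open>h\<close>.\<close>

lemma sum_pred_div_powers_less:
  fixes q h u k :: nat
  assumes "2 \<le> q" "0 < h" "0 < u" "h * u \<le> k"
    and digits: "(\<Sum>i=1..k-u. h div q ^ i) < least_digit_index q h + u"
  shows "(\<Sum>i=1..k-u. (h - 1) div q ^ i) < u"
proof -
  let ?v = "least_digit_index q h"
  have "(h - 1) div q ^ i + of_bool (i \<le> ?v) \<le> h div q ^ i" for i
  proof (cases "i \<le> ?v")
    case True
    then have "(h - 1) div q ^ i < h div q ^ i"
      using pred_div_less_div[OF _ power_dvd_if_le_least_digit_index assms(2)] assms(1) by simp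
    then show ?thesis using True by simp
  qed (simp add: div_le_mono)
  then have "(\<Sum>i=1..k-u. (h - 1) div q ^ i + of_bool (i \<le> ?v)) \<le> (\<Sum>i=1..k-u. h div q ^ i)"
    by (intro sum_mono)
  then have "(\<Sum>i=1..k-u. (h - 1) div q ^ i) + (\<Sum>i=1..k-u. of_bool (i \<le> ?v))
      \<le> (\<Sum>i=1..k-u. h div q ^ i)"
    by (simp only: sum.distrib)
  moreover have "(\<Sum>i=1..k-u. of_bool (i \<le> ?v) :: nat) = ?v"
  proof -
    have "{1..k - u} \<inter> {i. i \<le> ?v} = {1..?v}"
      using least_digit_index_le[OF assms(1-4)] by auto
    then show ?thesis by simp
  qed
  ultimately show ?thesis using digits by linarith
qed

lemma griesmer_term_low:
  fixes q :: nat
  assumes "0 < q" "i < u" "u \<le> k"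
  shows "ceil_div (q ^ (k - 1) - h * q ^ (u - 1) + 1) (q ^ i) = q ^ (k - 1 - i) - h * q ^ (u - 1 - i) + 1"
proof -
  have "q ^ (k - 1) - h * q ^ (u - 1) = (q ^ (k - 1 - i) - h * q ^ (u - 1 - i)) * q ^ i"
    using assms(2,3) by (simp add: diff_mult_distrib mult.assoc flip: power_add)
  then show ?thesis
    using ceil_div_mult_add_1[of "q ^ i" "q ^ (k - 1 - i) - h * q ^ (u - 1 - i)"] assms(1) by simp
qed

lemma griesmer_term_high:
  fixes q :: nat
  assumes "0 < q" "0 < u" "u \<le> i" "i < k" "h * q ^ (u - 1) < q ^ (k - 1)"
  shows "q ^ (k - 1 - i) \<le> ceil_div (q ^ (k - 1) - h * q ^ (u - 1) + 1) (q ^ i) + (h - 1) div q ^ (i - u + 1)"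
proof -
  define R where "R = q ^ (i - u + 1)"
  let ?t = "ceil_div (q ^ (k - 1) - h * q ^ (u - 1) + 1) (q ^ i)" and ?f = "(h - 1) div R"
  have "0 < R" using assms(1) by (simp add: R_def)
  then have "h - 1 < ?f * R + R"
    using div_mult_mod_eq[of "h - 1" R] mod_less_divisor[of R "h - 1"] by linarith
  then have "h * q ^ (u - 1) \<le> ((?f + 1) * R) * q ^ (u - 1)"
    by (intro mult_le_mono1) simp
  also have "i - u + 1 + (u - 1) = i" using assms(2,3) by arith
  then have "((?f + 1) * R) * q ^ (u - 1) = (?f + 1) * q ^ i"
    by (metis R_def mult.assoc power_add)
  finally have "h * q ^ (u - 1) \<le> (?f + 1) * q ^ i" .
  moreover have "q ^ (k - 1) - h * q ^ (u - 1) + 1 \<le> ?t * q ^ i"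
    using assms(1) by (simp add: le_ceil_div_mult)
  ultimately have "q ^ (k - 1) < (?t + ?f + 1) * q ^ i"
    using assms(5) by (simp add: algebra_simps; linarith)
  moreover have "q ^ (k - 1) = q ^ (k - 1 - i) * q ^ i"
    using assms(4) by (simp flip: power_add)
  ultimately have "q ^ (k - 1 - i) < ?t + ?f + 1"
    by (metis mult_less_cancel2)
  then show ?thesis by (simp add: R_def)
qed

text \<open>The terms of the Griesmer sum for \<open>d + 1\<close> with \<open>i < u\<close> are exact; each later term falls
  short of \<open>q ^ (k - 1 - i)\<close> by at most \<open>(h - 1) div q ^ (i - u + 1)\<close>, and the digit condition
  keeps the total shortfall below \<open>u\<close>.\<close>

lemma griesmer_sum_lower_bound:
  fixes q k u h :: nat
  assumes q: "2 \<le> q" and "0 < u" "0 < h" "h * u \<le> k" and d: "h * q ^ (u - 1) < q ^ (k - 1)"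
    and digits: "(\<Sum>i=1..k-u. h div q ^ i) < least_digit_index q h + u"
  shows "1 + (\<Sum>i<k. int q ^ i)
    \<le> int (griesmer_sum q k (q ^ (k - 1) - h * q ^ (u - 1) + 1)) + int h * (\<Sum>i<u. int q ^ i)"
proof -
  define t where "t i = ceil_div (q ^ (k - 1) - h * q ^ (u - 1) + 1) (q ^ i)" for i
  define F where "F = (\<Sum>i\<in>{u..<k}. (h - 1) div q ^ (i - u + 1))"
  have "u \<le> k" using assms(3,4) by (metis le_trans mult_le_mono1 One_nat_def Suc_leI mult_1)
  have "int (t i) = int q ^ (k - 1 - i) - int h * int q ^ (u - 1 - i) + 1" if "i < u" for i
  proof -
    have "h * q ^ (u - 1 - i) * q ^ i < q ^ (k - 1 - i) * q ^ i"
      using d that \<open>u \<le> k\<close> by (simp add: mult.assoc flip: power_add)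
    then show ?thesis
      using griesmer_term_low[of q i u k h] q that \<open>u \<le> k\<close> by (simp add: t_def)
  qed
  then have low: "int (\<Sum>i<u. t i) = (\<Sum>i<u. int q ^ (k - 1 - i)) - int h * (\<Sum>i<u. int q ^ (u - 1 - i)) + int u"
    by (simp add: sum.distrib sum_subtractf sum_distrib_left)
  have "int q ^ (k - 1 - i) - int ((h - 1) div q ^ (i - u + 1)) \<le> int (t i)" if "i \<in> {u..<k}" for i
    using griesmer_term_high[of q u i k h] q \<open>0 < u\<close> d that by (simp add: t_def flip: of_nat_power)
  then have "(\<Sum>i\<in>{u..<k}. int q ^ (k - 1 - i) - int ((h - 1) div q ^ (i - u + 1))) \<le> (\<Sum>i\<in>{u..<k}. int (t i))"
    by (rule sum_mono)
  then have high: "(\<Sum>i\<in>{u..<k}. int q ^ (k - 1 - i)) - int F \<le> int (\<Sum>i\<in>{u..<k}. t i)"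
    by (simp add: F_def sum_subtractf)
  have "F = (\<Sum>m=1..k-u. (h - 1) div q ^ m)"
    unfolding F_def
    by (rule sum.reindex_bij_witness[where i = "\<lambda>m. m + u - 1" and j = "\<lambda>i. i - u + 1"])
      (use \<open>0 < u\<close> in auto)
  then have "F < u" using sum_pred_div_powers_less[OF q assms(3,2,4) digits] by simp
  moreover have "(\<Sum>i<k. t i) = (\<Sum>i<u. t i) + (\<Sum>i\<in>{u..<k}. t i)"
    and "(\<Sum>i<k. int q ^ (k - 1 - i)) = (\<Sum>i<u. int q ^ (k - 1 - i)) + (\<Sum>i\<in>{u..<k}. int q ^ (k - 1 - i))"
    using \<open>u \<le> k\<close> by (simp_all add: lessThan_atLeast0 sum.atLeastLessThan_concat)
  moreover have "(\<Sum>i<m. int q ^ (m - 1 - i)) = (\<Sum>i<m. int q ^ i)" for m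
    using sum.nat_diff_reindex[of "\<lambda>i. int q ^ i" m] by simp
  ultimately show ?thesis
    using low high by (simp add: griesmer_sum_def t_def)
qed

lemma length_less_griesmer_sum:
  fixes q n k u h :: nat
  assumes q: "2 \<le> q" and "0 < u" "0 < h" "h * u \<le> k" and "h * q ^ (u - 1) < q ^ (k - 1)"
    and "(\<Sum>i=1..k-u. h div q ^ i) < least_digit_index q h + u"
    and length: "int n * (int q - 1) = int q ^ k - 1 - int h * (int q ^ u - 1)"
  shows "n < griesmer_sum q k (q ^ (k - 1) - h * q ^ (u - 1) + 1)"
proof -
  let ?G = "int (griesmer_sum q k (q ^ (k - 1) - h * q ^ (u - 1) + 1))"
  have "(int q - 1) * (1 + (\<Sum>i<k. int q ^ i)) \<le> (int q - 1) * (?G + int h * (\<Sum>i<u. int q ^ i))"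
    using griesmer_sum_lower_bound[OF assms(1-6)] q by (intro mult_left_mono) simp_all
  then have "(int q - 1) + (int q ^ k - 1) \<le> (int q - 1) * ?G + int h * (int q ^ u - 1)"
    by (simp add: distrib_left mult.left_commute[of "int q - 1"] flip: power_diff_1_eq)
  then have "(int q - 1) * (int n + 1) \<le> (int q - 1) * ?G"
    using length by (simp add: algebra_simps; linarith)
  then have "int n + 1 \<le> ?G"
    using q by (simp add: mult_le_cancel_left)
  then show ?thesis by linarith
qed

lemma hweight_eq_weight_on: "hweight n c = weight_on {..<n} c"
  by (simp add: hweight_def weight_on_def)

lemma distance_optimal_if_less_griesmer_sum:
  fixes C :: "(nat \<Rightarrow> 'a::{finite,field}) set"
  assumes code: "is_nkd_code n k d C" and less: "n < griesmer_sum CARD('a) k (d + 1)"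
  shows "distance_optimal n k d C"
  unfolding distance_optimal_def
proof (intro conjI notI)
  show "is_nkd_code n k d C" by (rule code)
  assume "\<exists>(C' :: (nat \<Rightarrow> 'a) set) d'. d + 1 \<le> d' \<and> is_nkd_code n k d' C'"
  then obtain C' :: "(nat \<Rightarrow> 'a) set" and d' where "d + 1 \<le> d'" and C': "lin_code n C'" "has_dim C' k" "min_dist n C' = d'"
    by (auto simp: is_nkd_code_def)
  have "d' \<le> weight_on {..<n} c" if "c \<in> C'" "c \<noteq> (\<lambda>_. 0)" for c
  proof -
    have "Min (hweight n ` (C' - {\<lambda>_. 0})) \<le> hweight n c"
      using finite_has_dim[OF C'(2)] that by (intro Min_le) auto
    then show ?thesis using C'(3) by (simp add: min_dist_def hweight_eq_weight_on)
  qed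
  then have "griesmer_sum CARD('a) k d' \<le> card {..<n}"
    using C'(1) \<open>d + 1 \<le> d'\<close>
    by (intro griesmer_bound[OF _ _ _ card_has_dim[OF C'(2)]]) (auto simp: lin_code_iff vecs_eq_coord_space)
  then show False
    using less griesmer_sum_mono[OF \<open>d + 1 \<le> d'\<close>, of "CARD('a)" k] by simp
qed

lemma weight_pos_if_gap:
  fixes q :: nat
  assumes "2 \<le> q" "0 < k" "0 < u" "h * (q ^ u - 1) < q ^ k - q ^ (k - 1)"
  shows "h * q ^ (u - 1) < q ^ (k - 1)"
proof -
  have "(q - 1) * q ^ (u - 1) = q ^ u - q ^ (u - 1)"
    using assms(3) by (simp add: diff_mult_distrib flip: power_Suc)
  moreover have "1 \<le> q ^ (u - 1)" using assms(1) by simp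
  ultimately have "(q - 1) * q ^ (u - 1) \<le> q ^ u - 1" by linarith
  then have "(q - 1) * (h * q ^ (u - 1)) \<le> h * (q ^ u - 1)"
    by (metis mult.left_commute mult_le_mono2)
  moreover have "q ^ k - q ^ (k - 1) = (q - 1) * q ^ (k - 1)"
    using assms(2) by (simp add: diff_mult_distrib flip: power_Suc)
  ultimately have "(q - 1) * (h * q ^ (u - 1)) < (q - 1) * q ^ (k - 1)"
    using assms(4) by linarith
  then show ?thesis by simp
qed

section \<open>Blocks of coordinates\<close>

definition block :: "nat \<Rightarrow> nat \<Rightarrow> nat set" where
  "block u i = {(i - 1) * u ..< i * u}"

definition nonzero_blocks :: "nat \<Rightarrow> nat \<Rightarrow> (nat \<Rightarrow> 'a::zero) \<Rightarrow> nat" where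
  "nonzero_blocks u m x = card {i \<in> {1..m}. coord_proj (block u i) x \<noteq> (\<lambda>_. 0)}"

lemma finite_block [simp]: "finite (block u i)"
  by (simp add: block_def)

lemma card_block: "1 \<le> i \<Longrightarrow> card (block u i) = u"
  by (cases i) (auto simp: block_def)

lemma block_subset_lessThan:
  assumes "i \<le> m"
  shows "block u i \<subseteq> {..<m * u}"
proof -
  have "i * u \<le> m * u" using assms by (rule mult_le_mono1)
  then show ?thesis
    unfolding block_def by (metis atLeastLessThan_iff lessThan_iff less_le_trans subsetI)
qed

lemma disjoint_blocks: "i \<noteq> j \<Longrightarrow> block u i \<inter> block u j = {}"
proof -
  have "block u i \<inter> block u j = {}" if "i < j" for i j
    using that mult_le_mono1[of i "j - 1" u] by (auto simp: block_def)
  then show "i \<noteq> j \<Longrightarrow> block u i \<inter> block u j = {}"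
    by (metis Int_commute linorder_neqE_nat)
qed

lemma nonzero_blocks_le: "nonzero_blocks u m x \<le> m"
  unfolding nonzero_blocks_def by (rule order_trans[OF card_mono[of "{1..m}"]]) auto

lemma nonzero_blocks_zero [simp]: "nonzero_blocks u m (\<lambda>_. 0) = 0"
  by (simp add: nonzero_blocks_def coord_proj_def)

lemma nonzero_blocks_coord_proj:
  assumes "m * u \<le> k"
  shows "nonzero_blocks u m (coord_proj {..<k} x) = nonzero_blocks u m x"
proof -
  have "block u i \<subseteq> {..<k}" if "i \<le> m" for i
    using block_subset_lessThan[OF that, of u] assms by auto
  then show ?thesis
    by (auto simp: nonzero_blocks_def coord_proj_coord_proj intro!: arg_cong[where f = card])
qed

lemma nonzero_blocks_Suc:
  "nonzero_blocks u (Suc m) x = nonzero_blocks u m (coord_proj {..<m * u} x)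
     + of_bool (coord_proj (block u (Suc m)) x \<noteq> (\<lambda>_. 0))"
proof -
  let ?P = "\<lambda>i. coord_proj (block u i) x \<noteq> (\<lambda>_. 0)"
  have "{i \<in> {1..Suc m}. ?P i} = {i \<in> {1..m}. ?P i} \<union> (if ?P (Suc m) then {Suc m} else {})"
    by (auto simp: le_Suc_eq)
  then have "nonzero_blocks u (Suc m) x = nonzero_blocks u m x + of_bool (?P (Suc m))"
    by (simp add: nonzero_blocks_def)
  then show ?thesis using nonzero_blocks_coord_proj[of m u "m * u" x] by simp
qed

lemma card_nonzero_blocks_prefix:
  "card {x \<in> coord_space {..<m * u} :: (nat \<Rightarrow> 'a::{finite,monoid_add}) set. nonzero_blocks u m x = j}
    = (m choose j) * (CARD('a) ^ u - 1) ^ j"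
proof (induction m arbitrary: j)
  case 0
  have "coord_space {} = {\<lambda>_. 0 :: 'a}" by (auto simp: coord_space_def)
  then show ?case by (cases j) (auto simp: nonzero_blocks_def)
next
  case (Suc m)
  let ?q = "CARD('a)" and ?A = "{..<m * u}" and ?B = "block u (Suc m)" and ?z = "\<lambda>_. 0 :: 'a"
  let ?V = "coord_space ?A :: (nat \<Rightarrow> 'a) set" and ?W = "coord_space ?B :: (nat \<Rightarrow> 'a) set"
  have AB: "?A \<union> ?B = {..<Suc m * u}" "?A \<inter> ?B = {}" by (auto simp: block_def)
  let ?S1 = "{x \<in> coord_space (?A \<union> ?B). nonzero_blocks u m (coord_proj ?A x) = j \<and> coord_proj ?B x = ?z}"
  let ?S2 = "{x \<in> coord_space (?A \<union> ?B). nonzero_blocks u m (coord_proj ?A x) + 1 = j \<and> coord_proj ?B x \<noteq> ?z}"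
  have "{x \<in> coord_space {..<Suc m * u} :: (nat \<Rightarrow> 'a) set. nonzero_blocks u (Suc m) x = j} = ?S1 \<union> ?S2"
    unfolding AB(1) by (auto simp: nonzero_blocks_Suc)
  moreover have "card (?S1 \<union> ?S2) = card ?S1 + card ?S2"
    by (rule card_Un_disjoint) (auto intro: finite_subset[OF _ finite_coord_space[of "?A \<union> ?B"]])
  moreover note card_coord_space_Un[OF _ _ AB(2), of "\<lambda>y. nonzero_blocks u m y = j" "\<lambda>z. z = ?z"]
    card_coord_space_Un[OF _ _ AB(2), of "\<lambda>y. nonzero_blocks u m y + 1 = j" "\<lambda>z. z \<noteq> ?z"]
  ultimately have "card {x \<in> coord_space {..<Suc m * u} :: (nat \<Rightarrow> 'a) set. nonzero_blocks u (Suc m) x = j}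
      = card {y \<in> ?V. nonzero_blocks u m y = j} * card {z \<in> ?W. z = ?z}
      + card {y \<in> ?V. nonzero_blocks u m y + 1 = j} * card {z \<in> ?W. z \<noteq> ?z}"
    by simp
  also have "\<dots> = card {y \<in> ?V. nonzero_blocks u m y = j}
      + card {y \<in> ?V. nonzero_blocks u m y + 1 = j} * (?q ^ u - 1)"
  proof -
    have "{z \<in> ?W. z = ?z} = {?z}" "{z \<in> ?W. z \<noteq> ?z} = ?W - {?z}" by auto
    then show ?thesis
      using card_coord_space_nonzero[of ?B, where 'a = 'a] card_block[of "Suc m" u] by simp
  qed
  also have "\<dots> = (Suc m choose j) * (?q ^ u - 1) ^ j"
    using Suc.IH by (cases j) (simp_all add: algebra_simps)
  finally show ?case .
qed

lemma card_nonzero_blocks: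
  assumes "h * u \<le> k"
  shows "card {x \<in> coord_space {..<k} :: (nat \<Rightarrow> 'a::{finite,monoid_add}) set. nonzero_blocks u h x = j}
    = (h choose j) * (CARD('a) ^ u - 1) ^ j * CARD('a) ^ (k - h * u)"
proof -
  let ?A = "{..<h * u}" and ?B = "{h * u..<k}"
  have AB: "?A \<union> ?B = {..<k}" "?A \<inter> ?B = {}" using assms by auto
  have "{x \<in> coord_space {..<k}. nonzero_blocks u h x = j}
      = {x \<in> coord_space (?A \<union> ?B) :: (nat \<Rightarrow> 'a) set. nonzero_blocks u h (coord_proj ?A x) = j \<and> True}"
    unfolding AB(1) using nonzero_blocks_coord_proj[of h u "h * u"] by auto
  also have "card \<dots> = card {y \<in> coord_space ?A :: (nat \<Rightarrow> 'a) set. nonzero_blocks u h y = j}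
      * card (coord_space ?B :: (nat \<Rightarrow> 'a) set)"
    using card_coord_space_Un[of ?A ?B "\<lambda>y. nonzero_blocks u h y = j" "\<lambda>_. True"] AB(2) by simp
  finally show ?thesis
    using card_nonzero_blocks_prefix[of h u j] card_coord_space[of ?B, where 'a = 'a] by simp
qed

section \<open>The code\<close>

lemma proj_reps_scaled_eq:
  fixes S :: "(nat \<Rightarrow> 'a::field) set"
  assumes reps: "proj_reps S cols" and S_smult: "\<And>v l. v \<in> S \<Longrightarrow> l \<noteq> 0 \<Longrightarrow> (\<lambda>i. l * v i) \<in> S"
    and zero: "(\<lambda>_. 0) \<notin> S"
    and j: "j < length cols" "j' < length cols" and "l \<noteq> 0" "l' \<noteq> 0"
    and eq: "(\<lambda>i. l * (cols ! j) i) = (\<lambda>i. l' * (cols ! j') i)"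
  shows "j = j' \<and> l = l'"
proof -
  let ?v = "\<lambda>i. l * (cols ! j) i"
  have "cols ! j \<in> S" using reps j(1) by (auto simp: proj_reps_def)
  then have "?v \<in> S" using S_smult \<open>l \<noteq> 0\<close> by blast
  then have unique: "\<exists>!t. t < length cols \<and> (\<exists>c. c \<noteq> 0 \<and> cols ! t = (\<lambda>i. c * ?v i))"
    using reps by (auto simp: proj_reps_def)
  have "cols ! j = (\<lambda>i. inverse l * ?v i)" using \<open>l \<noteq> 0\<close> by (auto simp: fun_eq_iff)
  then have "j < length cols \<and> (\<exists>c. c \<noteq> 0 \<and> cols ! j = (\<lambda>i. c * ?v i))"
    using j(1) \<open>l \<noteq> 0\<close> by (intro conjI exI[of _ "inverse l"]) auto
  moreover have "cols ! j' = (\<lambda>i. inverse l' * ?v i)"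
    using \<open>l' \<noteq> 0\<close> eq by (auto simp: fun_eq_iff)
  then have "j' < length cols \<and> (\<exists>c. c \<noteq> 0 \<and> cols ! j' = (\<lambda>i. c * ?v i))"
    using j(2) \<open>l' \<noteq> 0\<close> by (intro conjI exI[of _ "inverse l'"]) auto
  ultimately have "j = j'" using unique by blast
  moreover obtain i where "(cols ! j) i \<noteq> 0"
    using \<open>cols ! j \<in> S\<close> zero by (metis ext)
  ultimately show ?thesis using fun_cong[OF eq, of i] by simp
qed

text \<open>Every point of \<open>S\<close> is a nonzero multiple of exactly one column and conversely, so counting
  columns with a scaling-invariant property counts the corresponding points of \<open>S\<close> up to the factor
  \<open>q - 1\<close>.\<close>

lemma card_proj_reps_filter:
  fixes S :: "(nat \<Rightarrow> 'a::{finite,field}) set"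
  assumes reps: "proj_reps S cols" and S_smult: "\<And>v l. v \<in> S \<Longrightarrow> l \<noteq> 0 \<Longrightarrow> (\<lambda>i. l * v i) \<in> S"
    and zero: "(\<lambda>_. 0) \<notin> S"
    and inv: "\<And>v l. v \<in> S \<Longrightarrow> l \<noteq> 0 \<Longrightarrow> P (\<lambda>i. l * v i) = P v"
  shows "card {j. j < length cols \<and> P (cols ! j)} * (CARD('a) - 1) = card {v \<in> S. P v}"
proof -
  let ?A = "{j. j < length cols \<and> P (cols ! j)}" and ?L = "UNIV - {0 :: 'a}"
  let ?f = "\<lambda>(j, l) i. l * (cols ! j) i"
  have cols_S: "cols ! j \<in> S" if "j < length cols" for j
    using reps that by (auto simp: proj_reps_def)
  have "bij_betw ?f (?A \<times> ?L) {v \<in> S. P v}"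
  proof (rule bij_betw_imageI)
    show "inj_on ?f (?A \<times> ?L)"
      using proj_reps_scaled_eq[OF reps S_smult zero] by (auto simp: inj_on_def)
    show "?f ` (?A \<times> ?L) = {v \<in> S. P v}"
    proof (intro equalityI subsetI)
      fix v assume "v \<in> ?f ` (?A \<times> ?L)"
      then show "v \<in> {v \<in> S. P v}"
        using cols_S S_smult inv by auto
    next
      fix v assume v: "v \<in> {v \<in> S. P v}"
      then obtain j l where jl: "j < length cols" "l \<noteq> 0" "cols ! j = (\<lambda>i. l * v i)"
        using reps by (auto simp: proj_reps_def)
      have "P (cols ! j)" using jl inv[of v l] v by simp
      moreover have "v = (\<lambda>i. inverse l * (cols ! j) i)" using jl by (simp add: fun_eq_iff)
      ultimately show "v \<in> ?f ` (?A \<times> ?L)"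
        using jl(1,2) by (intro image_eqI[of _ _ "(j, inverse l)"]) auto
    qed
  qed
  then show ?thesis
    by (simp add: bij_betw_same_card[symmetric] card_cartesian_product card_Diff_singleton)
qed

lemma orth_Int_coord_space:
  assumes "I \<subseteq> J" "finite J"
  shows "orth J X \<inter> coord_space I = orth I (coord_proj I ` X)"
proof -
  have "dot J x v = dot I (coord_proj I x) v" if "v \<in> coord_space I" for x v
  proof -
    have "dot J x v = (\<Sum>j\<in>I. x j * v j)"
      unfolding dot_def using assms that by (intro sum.mono_neutral_right) (auto simp: coord_space_def)
    then show ?thesis by (simp add: dot_def coord_proj_def)
  qed
  then show ?thesis
    using assms(1) by (auto simp: orth_def coord_space_def)
qed

definition encode :: "nat \<Rightarrow> (nat \<Rightarrow> 'a::field) list \<Rightarrow> (nat \<Rightarrow> 'a) \<Rightarrow> (nat \<Rightarrow> 'a)" where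
  "encode k cols x = (\<lambda>j. if j < length cols then dot {..<k} x (cols ! j) else 0)"

lemma gen_code_eq_image_encode: "gen_code k cols = encode k cols ` coord_space {..<k}"
  unfolding gen_code_def encode_def dot_def vecs_eq_coord_space by simp

lemma lin_map_encode: "lin_map (encode k cols)"
  by (auto simp: lin_map_def encode_def dot_add_left dot_smult_left fun_eq_iff)

lemma encode_zero [simp]: "encode k cols (\<lambda>_. 0) = (\<lambda>_. 0)"
  by (rule lin_map_zero[OF lin_map_encode])

lemma encode_in_vecs: "encode k cols x \<in> vecs (length cols)"
  by (simp add: encode_def vecs_def)

lemma code_support_encode:
  "code_support (length cols) (encode k cols ` X)
    = {j. j < length cols \<and> (\<exists>x\<in>X. dot {..<k} x (cols ! j) \<noteq> 0)}"
  by (auto simp: code_support_def encode_def)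

lemma hweight_zero [simp]: "hweight m (\<lambda>_. 0) = 0"
  by (simp add: hweight_def)

lemma hweight_encode:
  "hweight (length cols) (encode k cols x) = card (code_support (length cols) (encode k cols ` line x))"
proof -
  have "(\<exists>y\<in>line x. dot {..<k} y v \<noteq> 0) \<longleftrightarrow> dot {..<k} x v \<noteq> 0" for v
    using in_line[of x] by (auto simp: line_def dot_smult_left)
  then have "{j. j < length cols \<and> encode k cols x j \<noteq> 0} = code_support (length cols) (encode k cols ` line x)"
    unfolding code_support_encode by (auto simp: encode_def)
  then show ?thesis by (simp add: hweight_def)
qed

text \<open>The image of \<open>coord_space {..<r}\<close> under \<open>spread u h r\<close> is an \<open>r\<close>-dimensional subspace whose projection
  to each block has the largest possible dimension \<open>min r u\<close>; it attains the generalized Hamming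
  weights.\<close>

definition spread :: "nat \<Rightarrow> nat \<Rightarrow> nat \<Rightarrow> (nat \<Rightarrow> 'a::field) \<Rightarrow> (nat \<Rightarrow> 'a)" where
  "spread u h r a = (\<lambda>i. (if i < r then a i else 0) + (if u \<le> i \<and> i < h * u then a (i mod u) else 0))"

lemma lin_map_spread: "lin_map (spread u h r)"
  by (auto simp: lin_map_def spread_def fun_eq_iff algebra_simps)

lemma spread_in_coord_space:
  "r \<le> k \<Longrightarrow> h * u \<le> k \<Longrightarrow> spread u h r a \<in> coord_space {..<k}"
  by (auto simp: coord_space_def spread_def)

lemma inj_on_spread:
  assumes "0 < u"
  shows "inj_on (spread u h r) (coord_space {..<r})"
proof (rule inj_onI)
  fix a b assume ab: "a \<in> coord_space {..<r}" "b \<in> coord_space {..<r}" "spread u h r a = spread u h r b"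
  have recover: "a i = (if i < u then spread u h r a i
      else spread u h r a i - (if i < h * u then spread u h r a (i mod u) else 0))"
    if "a \<in> coord_space {..<r}" for a i
    using that assms mod_less_divisor[OF assms, of i] by (auto simp: spread_def coord_space_def)
  show "a = b"
    using recover[OF ab(1)] recover[OF ab(2)] ab(3) by (auto simp: fun_eq_iff)
qed

lemma spread_block_coord:
  assumes "a \<in> coord_space {..<min r u}" "1 \<le> i" "i \<le> h" "t < u"
  shows "spread u h r a ((i - 1) * u + t) = a t"
proof (cases "i = 1")
  case False
  define j where "j = (i - 1) * u + t"
  have "1 * u \<le> (i - 1) * u" using False assms(2) by (intro mult_le_mono1) auto
  then have "u \<le> j" unfolding j_def by linarith
  moreover have "j < i * u" using assms(2,4) by (cases i) (auto simp: j_def)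
  then have "j < h * u" using mult_le_mono1[OF assms(3), of u] by linarith
  moreover have "j mod u = t" using assms(4) by (simp add: j_def)
  moreover have "a j = 0" using assms(1) \<open>u \<le> j\<close> by (auto simp: coord_space_def)
  ultimately show ?thesis unfolding j_def[symmetric] by (simp add: spread_def)
qed (use assms in \<open>auto simp: spread_def coord_space_def\<close>)

locale block_complement_code =
  fixes cols :: "(nat \<Rightarrow> 'a::{finite,field}) list" and k u h :: nat
  assumes u_pos: "0 < u" and h_pos: "0 < h" and blocks_fit: "h * u \<le> k"
    and weight_pos: "h * CARD('a) ^ (u - 1) < CARD('a) ^ (k - 1)"
    and cols_reps: "proj_reps (U_set k u h) cols"
begin

abbreviation n :: nat where "n \<equiv> length cols"
abbreviation V :: "(nat \<Rightarrow> 'a) set" where "V \<equiv> coord_space {..<k}"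
abbreviation U :: "(nat \<Rightarrow> 'a) set" where "U \<equiv> U_set k u h"
abbreviation B :: "nat \<Rightarrow> (nat \<Rightarrow> 'a) set" where "B i \<equiv> coord_space (block u i)"

lemma finite_V: "finite V"
  by (simp add: finite_coord_space)

lemma block_subset: "i \<le> h \<Longrightarrow> block u i \<subseteq> {..<k}"
  using block_subset_lessThan[of i h u] blocks_fit by auto

lemma U_eq: "U = V - {\<lambda>_. 0} - (\<Union>i\<in>{1..h}. B i)"
proof -
  have "block_subspace k u i = B i" if "i \<le> h" for i
    using block_subset[OF that]
    by (auto simp: block_subspace_def vecs_def coord_space_def block_def subset_iff)
  then show ?thesis by (auto simp: U_set_def vecs_eq_coord_space)
qed

lemma card_cols_filter:
  assumes "\<And>v l. v \<in> U \<Longrightarrow> l \<noteq> 0 \<Longrightarrow> P (\<lambda>i. l * v i) = P v"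
  shows "card {j. j < n \<and> P (cols ! j)} * (CARD('a) - 1) = card {v \<in> U. P v}"
proof (rule card_proj_reps_filter[OF cols_reps _ _ assms])
  show "(\<lambda>i. l * v i) \<in> U" if "v \<in> U" "l \<noteq> 0" for v l
    using that by (auto simp: U_set_def block_subspace_def vecs_def fun_eq_iff)
  show "(\<lambda>_. 0) \<notin> U" by (simp add: U_set_def)
qed

text \<open>The blocks meet pairwise only in \<open>0\<close>, so \<open>W\<close> splits into \<open>0\<close>, \<open>U \<inter> W\<close> and the
  nonzero parts of the \<open>W \<inter> B i\<close>.\<close>

lemma card_U_Int:
  assumes W: "W \<subseteq> V" "(\<lambda>_. 0) \<in> W"
  shows "card (U \<inter> W) + 1 + (\<Sum>i\<in>{1..h}. card (W \<inter> B i)) = card W + h"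
proof -
  let ?z = "\<lambda>_. 0 :: 'a" and ?D = "\<lambda>i. W \<inter> B i - {\<lambda>_. 0}"
  have finW: "finite W" using finite_subset[OF W(1) finite_V] .
  have B_disjoint: "v = ?z" if "v \<in> B i" "v \<in> B j" "i \<noteq> j" for v i j
  proof
    fix t show "v t = 0"
      using that disjoint_blocks[OF that(3), of u] by (auto simp: coord_space_def)
  qed
  let ?S = "(U \<inter> W) \<union> (\<Union>i\<in>{1..h}. ?D i)"
  have "card (\<Union>i\<in>{1..h}. ?D i) = (\<Sum>i\<in>{1..h}. card (?D i))"
    using finW B_disjoint by (intro card_UN_disjoint) auto
  moreover have "card ?S = card (U \<inter> W) + card (\<Union>i\<in>{1..h}. ?D i)"
    using finW U_eq by (intro card_Un_disjoint) auto
  moreover have "W = insert ?z ?S"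
    using W U_eq by auto
  then have "card W = card (insert ?z ?S)" by (rule arg_cong)
  moreover have "card (insert ?z ?S) = Suc (card ?S)"
    using finW U_eq by (intro card_insert_disjoint) auto
  moreover have "card (?D i) + 1 = card (W \<inter> B i)" for i
    using card_Suc_Diff1[of "W \<inter> B i" ?z] W(2) finW by simp
  then have "(\<Sum>i\<in>{1..h}. card (W \<inter> B i)) = (\<Sum>i\<in>{1..h}. card (?D i) + 1)"
    by presburger
  then have "(\<Sum>i\<in>{1..h}. card (W \<inter> B i)) = (\<Sum>i\<in>{1..h}. card (?D i)) + h"
    by (simp add: sum_Suc)
  ultimately show ?thesis by simp
qed

lemma card_U: "card U + 1 + h * CARD('a) ^ u = CARD('a) ^ k + h"
proof -
  have "B i \<subseteq> V" if "i \<in> {1..h}" for i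
    using block_subset that by (auto simp: coord_space_def)
  then have "(\<Sum>i\<in>{1..h}. card (V \<inter> B i)) = h * CARD('a) ^ u"
    using card_coord_space[of "block u _", where 'a = 'a] card_block by (simp add: Int_absorb1)
  moreover have "U \<inter> V = U" using U_eq by auto
  ultimately show ?thesis
    using card_U_Int[of V] card_coord_space[of "{..<k}", where 'a = 'a] by simp
qed

lemma length_cols_int: "int n * (int CARD('a) - 1) = int CARD('a) ^ k - 1 - int h * (int CARD('a) ^ u - 1)"
proof -
  have "n * (CARD('a) - 1) = card U"
    using card_cols_filter[of "\<lambda>_. True"] by simp
  then have "int n * (int CARD('a) - 1) = int (card U)"
    using CARD_field_ge_2[where 'a = 'a] by (metis of_nat_1 of_nat_diff of_nat_mult one_le_numeral order_trans)
  moreover have "int (card U) + 1 + int h * int CARD('a) ^ u = int CARD('a) ^ k + int h"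
    using arg_cong[OF card_U, of int] by simp
  ultimately show ?thesis by (simp add: algebra_simps)
qed

lemma length_cols: "real n = ((real CARD('a) ^ k - 1) - real h * (real CARD('a) ^ u - 1)) / (real CARD('a) - 1)"
proof -
  have "real n * (real CARD('a) - 1) = (real CARD('a) ^ k - 1) - real h * (real CARD('a) ^ u - 1)"
    using arg_cong[OF length_cols_int, of real_of_int] by simp
  moreover have "real CARD('a) - 1 \<noteq> 0" using CARD_field_ge_2[where 'a = 'a] by simp
  ultimately show ?thesis by (simp add: field_simps)
qed

lemma card_coord_proj_block_mult_card_orth:
  assumes "X \<subseteq> V" "is_subspace X" "i \<in> {1..h}"
  shows "card (coord_proj (block u i) ` X) * card (orth {..<k} X \<inter> B i) = CARD('a) ^ u"
proof -
  have "orth {..<k} X \<inter> B i = orth (block u i) (coord_proj (block u i) ` X)"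
    using block_subset assms(3) by (intro orth_Int_coord_space) auto
  moreover have "card (coord_proj (block u i) ` X) * card (orth (block u i) (coord_proj (block u i) ` X))
      = CARD('a) ^ card (block u i)"
    by (intro card_subspace_mult_card_orth is_subspace_image[OF lin_map_coord_proj assms(2)]) auto
  ultimately show ?thesis using card_block assms(3) by simp
qed

lemma card_code_support:
  assumes "X \<subseteq> V"
  shows "int (card (code_support n (encode k cols ` X))) * (int CARD('a) - 1)
    = int CARD('a) ^ k - int (card (orth {..<k} X))
      - (\<Sum>i\<in>{1..h}. int CARD('a) ^ u - int (card (orth {..<k} X \<inter> B i)))"
proof -
  let ?P = "orth {..<k} X" and ?S = "code_support n (encode k cols ` X)"
  have "card ?S * (CARD('a) - 1) = card {v \<in> U. \<exists>x\<in>X. dot {..<k} x v \<noteq> 0}"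
    unfolding code_support_encode by (rule card_cols_filter) (simp add: dot_smult_right)
  also have "{v \<in> U. \<exists>x\<in>X. dot {..<k} x v \<noteq> 0} = U - ?P"
    using U_eq by (auto simp: orth_def)
  finally have "card ?S * (CARD('a) - 1) + card (U \<inter> ?P) = card U"
    using card_Int_Diff[of U ?P] finite_subset[OF _ finite_V] U_eq by fastforce
  then have "int (card ?S) * (int CARD('a) - 1) + int (card (U \<inter> ?P)) = int (card U)"
    using arg_cong[of _ _ int] CARD_field_ge_2[where 'a = 'a] by (fastforce simp: of_nat_diff)
  moreover have "card (U \<inter> ?P) + 1 + (\<Sum>i\<in>{1..h}. card (?P \<inter> B i)) = card ?P + h"
    by (rule card_U_Int) (auto simp: orth_def dot_def)
  then have "int (card (U \<inter> ?P)) + 1 + (\<Sum>i\<in>{1..h}. int (card (?P \<inter> B i))) = int (card ?P) + int h"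
    using arg_cong[of _ _ int] by (fastforce simp: of_nat_sum)
  moreover have "int (card U) + 1 + int h * int CARD('a) ^ u = int CARD('a) ^ k + int h"
    using arg_cong[OF card_U, of int] by simp
  ultimately show ?thesis
    by (simp add: sum_subtractf algebra_simps)
qed

lemma k_pos: "0 < k"
  using u_pos h_pos blocks_fit by (metis mult_pos_pos order_less_le_trans)

lemma u_le_k: "u \<le> k"
  using h_pos blocks_fit by (metis le_trans mult_le_mono1 One_nat_def Suc_leI mult_1)

lemma card_orth_line:
  assumes "x \<in> V" "x \<noteq> (\<lambda>_. 0)"
  shows "card (orth {..<k} (line x)) = CARD('a) ^ (k - 1)"
  using card_orth_eq[of "{..<k}" "line x" 1] line_subset_coord_space[OF assms(1)]
    card_line[OF assms(2)] k_pos by (simp add: is_subspace_line)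

lemma card_orth_line_Int_block:
  assumes "x \<in> V" "i \<in> {1..h}"
  shows "card (orth {..<k} (line x) \<inter> B i)
    = (if coord_proj (block u i) x \<noteq> (\<lambda>_. 0) then CARD('a) ^ (u - 1) else CARD('a) ^ u)"
proof -
  have "card (line (coord_proj (block u i) x)) * card (orth {..<k} (line x) \<inter> B i) = CARD('a) ^ u"
    using card_coord_proj_block_mult_card_orth[OF line_subset_coord_space[OF assms(1)] is_subspace_line
        assms(2)] by (simp add: image_coord_proj_line)
  moreover have "CARD('a) ^ u = CARD('a) * CARD('a) ^ (u - 1)"
    using u_pos by (simp flip: power_Suc)
  ultimately show ?thesis using CARD_field_ge_2[where 'a = 'a] by (auto simp: card_line line_zero)
qed

lemma hweight_encode_eq:
  assumes "x \<in> V" "x \<noteq> (\<lambda>_. 0)"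
  shows "int (hweight n (encode k cols x))
    = int CARD('a) ^ (k - 1) - int (nonzero_blocks u h x) * int CARD('a) ^ (u - 1)"
proof -
  let ?q = "int CARD('a)" and ?P = "orth {..<k} (line x)"
  have "(\<Sum>i\<in>{1..h}. ?q ^ u - int (card (?P \<inter> B i)))
      = (\<Sum>i\<in>{1..h}. if coord_proj (block u i) x \<noteq> (\<lambda>_. 0) then ?q ^ u - ?q ^ (u - 1) else 0)"
    using card_orth_line_Int_block[OF assms(1)] by (intro sum.cong) auto
  also have "\<dots> = (\<Sum>i\<in>{i \<in> {1..h}. coord_proj (block u i) x \<noteq> (\<lambda>_. 0)}. ?q ^ u - ?q ^ (u - 1))"
    by (rule sum.inter_filter[symmetric]) simp
  also have "\<dots> = int (nonzero_blocks u h x) * (?q ^ u - ?q ^ (u - 1))"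
    by (simp add: nonzero_blocks_def)
  finally have "int (hweight n (encode k cols x)) * (?q - 1)
      = ?q ^ k - ?q ^ (k - 1) - int (nonzero_blocks u h x) * (?q ^ u - ?q ^ (u - 1))"
    using card_code_support[OF line_subset_coord_space[OF assms(1)]] card_orth_line[OF assms]
    by (simp add: hweight_encode)
  also have "\<dots> = (?q ^ (k - 1) - int (nonzero_blocks u h x) * ?q ^ (u - 1)) * (?q - 1)"
    using k_pos u_pos by (simp add: algebra_simps flip: power_Suc)
  finally show ?thesis using CARD_field_ge_2[where 'a = 'a] by simp
qed

lemma weight_pos_int: "int h * int CARD('a) ^ (u - 1) < int CARD('a) ^ (k - 1)"
  using weight_pos by (metis of_nat_less_iff of_nat_mult of_nat_power)

lemma hweight_encode_ge:
  assumes "x \<in> V" "x \<noteq> (\<lambda>_. 0)"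
  shows "int CARD('a) ^ (k - 1) - int h * int CARD('a) ^ (u - 1) \<le> int (hweight n (encode k cols x))"
proof -
  have "int (nonzero_blocks u h x) * int CARD('a) ^ (u - 1) \<le> int h * int CARD('a) ^ (u - 1)"
    by (intro mult_right_mono) (simp_all add: nonzero_blocks_le)
  then show ?thesis using hweight_encode_eq[OF assms] by simp
qed

lemma hweight_encode_pos: "x \<in> V \<Longrightarrow> x \<noteq> (\<lambda>_. 0) \<Longrightarrow> 0 < hweight n (encode k cols x)"
  using hweight_encode_ge[of x] weight_pos_int by linarith

lemma hweight_encode_eq_0_iff: "x \<in> V \<Longrightarrow> hweight n (encode k cols x) = 0 \<longleftrightarrow> x = (\<lambda>_. 0)"
  using hweight_encode_pos[of x] by (cases "x = (\<lambda>_. 0)") auto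

lemma inj_on_encode: "inj_on (encode k cols) V"
proof (rule inj_onI)
  fix x y assume xy: "x \<in> V" "y \<in> V" "encode k cols x = encode k cols y"
  then have "encode k cols (\<lambda>i. x i - y i) = (\<lambda>_. 0)"
    by (simp add: lin_map_diff[OF lin_map_encode])
  moreover have "(\<lambda>i. x i - y i) \<in> V" using xy(1,2) by (simp add: coord_space_def)
  ultimately have "(\<lambda>i. x i - y i) = (\<lambda>_. 0)"
    using hweight_encode_eq_0_iff[of "\<lambda>i. x i - y i"] by simp
  then show "x = y" by (simp add: fun_eq_iff)
qed

lemma lin_code_gen_code: "lin_code n (gen_code k cols)"
  unfolding lin_code_iff gen_code_eq_image_encode
  using encode_in_vecs is_subspace_image[OF lin_map_encode is_subspace_coord_space] by blast

lemma has_dim_gen_code: "has_dim (gen_code k cols) k"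
  unfolding gen_code_eq_image_encode by (rule has_dim_image[OF lin_map_encode inj_on_encode])

lemma card_gen_code_filter:
  "card {c \<in> gen_code k cols. R c} = card {x \<in> V. R (encode k cols x)}"
proof -
  have "{c \<in> gen_code k cols. R c} = encode k cols ` {x \<in> V. R (encode k cols x)}"
    by (auto simp: gen_code_eq_image_encode)
  then show ?thesis
    using card_image[OF inj_on_subset[OF inj_on_encode]] by simp
qed

lemma hweight_encode_eq_iff:
  assumes "x \<in> V" "j \<le> h"
  shows "int (hweight n (encode k cols x)) = int CARD('a) ^ (k - 1) - int j * int CARD('a) ^ (u - 1)
    \<longleftrightarrow> x \<noteq> (\<lambda>_. 0) \<and> nonzero_blocks u h x = j"
proof (cases "x = (\<lambda>_. 0)")
  case True
  have "int j * int CARD('a) ^ (u - 1) \<le> int h * int CARD('a) ^ (u - 1)"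
    using assms(2) by (intro mult_right_mono) auto
  then have "int j * int CARD('a) ^ (u - 1) < int CARD('a) ^ (k - 1)"
    using weight_pos_int by linarith
  then show ?thesis using True by auto
next
  case False
  then show ?thesis using hweight_encode_eq[OF assms(1)] by simp
qed

lemma card_weight_zero: "card {c \<in> gen_code k cols. hweight n c = 0} = 1"
proof -
  have "{x \<in> V. hweight n (encode k cols x) = 0} = {\<lambda>_. 0}"
    using hweight_encode_eq_0_iff by auto
  then show ?thesis by (simp add: card_gen_code_filter)
qed

lemma card_weight_max:
  "card {c \<in> gen_code k cols. hweight n c = CARD('a) ^ (k - 1)} = CARD('a) ^ (k - h * u) - 1"
proof -
  have "{x \<in> V. hweight n (encode k cols x) = CARD('a) ^ (k - 1)}
      = {x \<in> V. nonzero_blocks u h x = 0} - {\<lambda>_. 0}"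
    using hweight_encode_eq_iff[of _ 0] by auto
  moreover have "finite {x \<in> V. nonzero_blocks u h x = 0}"
    using finite_V by simp
  ultimately show ?thesis
    using card_nonzero_blocks[OF blocks_fit, of 0, where 'a = 'a]
    by (simp add: card_gen_code_filter card_Diff_singleton)
qed

lemma card_weight_drop:
  assumes "j \<in> {1..h}"
  shows "card {c \<in> gen_code k cols. int (hweight n c) = int CARD('a) ^ (k - 1) - int j * int CARD('a) ^ (u - 1)}
    = (h choose j) * (CARD('a) ^ u - 1) ^ j * CARD('a) ^ (k - h * u)"
proof -
  have "{x \<in> V. int (hweight n (encode k cols x)) = int CARD('a) ^ (k - 1) - int j * int CARD('a) ^ (u - 1)}
      = {x \<in> V. nonzero_blocks u h x = j}"
    using hweight_encode_eq_iff[of _ j] assms by auto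
  then show ?thesis
    using card_nonzero_blocks[OF blocks_fit, of j, where 'a = 'a] by (simp add: card_gen_code_filter)
qed

lemma hweight_cases:
  assumes "c \<in> gen_code k cols"
  shows "hweight n c = 0 \<or> hweight n c = CARD('a) ^ (k - 1)
    \<or> (\<exists>j\<in>{1..h}. int (hweight n c) = int CARD('a) ^ (k - 1) - int j * int CARD('a) ^ (u - 1))"
proof -
  obtain x where x: "x \<in> V" "c = encode k cols x"
    using assms by (auto simp: gen_code_eq_image_encode)
  consider "x = (\<lambda>_. 0)" | "x \<noteq> (\<lambda>_. 0)" "nonzero_blocks u h x = 0" | "x \<noteq> (\<lambda>_. 0)" "nonzero_blocks u h x \<in> {1..h}"
    using nonzero_blocks_le[of u h x] by fastforce
  then show ?thesis
  proof cases
    case 1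
    then show ?thesis using x by (simp add: hweight_def)
  next
    case 2
    then show ?thesis using x hweight_encode_eq[OF x(1)] by (simp flip: of_nat_power)
  next
    case 3
    then show ?thesis using x hweight_encode_eq[OF x(1)] by blast
  qed
qed

lemma min_dist_gen_code:
  "int (min_dist n (gen_code k cols)) = int CARD('a) ^ (k - 1) - int h * int CARD('a) ^ (u - 1)"
proof -
  have "1 < CARD('a) ^ u" using CARD_field_ge_2[where 'a = 'a] u_pos by (intro one_less_power) auto
  then have "0 < (CARD('a) ^ u - 1) ^ h * CARD('a) ^ (k - h * u)" by simp
  then have "{x \<in> V. nonzero_blocks u h x = h} \<noteq> {}"
    using card_nonzero_blocks[OF blocks_fit, of h, where 'a = 'a] by (metis card.empty less_irrefl binomial_n_n mult_1)
  then obtain x0 where x0: "x0 \<in> V" "nonzero_blocks u h x0 = h" by blast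
  then have "x0 \<noteq> (\<lambda>_. 0)" using h_pos by auto
  let ?w = "hweight n (encode k cols x0)"
  have "Min (hweight n ` (gen_code k cols - {\<lambda>_. 0})) = ?w"
  proof (rule Min_eqI)
    show "finite (hweight n ` (gen_code k cols - {\<lambda>_. 0}))"
      using finite_V by (simp add: gen_code_eq_image_encode)
    show "?w \<in> hweight n ` (gen_code k cols - {\<lambda>_. 0})"
      using x0 hweight_encode_pos[OF x0(1) \<open>x0 \<noteq> (\<lambda>_. 0)\<close>]
      by (auto simp: gen_code_eq_image_encode hweight_def)
    show "?w \<le> y" if "y \<in> hweight n ` (gen_code k cols - {\<lambda>_. 0})" for y
      using that hweight_encode_ge hweight_encode_eq[OF x0(1) \<open>x0 \<noteq> (\<lambda>_. 0)\<close>] x0(2)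
      by (fastforce simp: gen_code_eq_image_encode)
  qed
  then show ?thesis
    using hweight_encode_eq[OF x0(1) \<open>x0 \<noteq> (\<lambda>_. 0)\<close>] x0(2) by (simp add: min_dist_def)
qed

lemma card_orth_Int_block_ge:
  assumes "X \<subseteq> V" "is_subspace X" "card X = CARD('a) ^ r" "i \<in> {1..h}"
  shows "CARD('a) ^ (u - min r u) \<le> card (orth {..<k} X \<inter> B i)"
proof -
  let ?p = "card (coord_proj (block u i) ` X)"
  have "?p \<le> CARD('a) ^ r"
    using card_image_le[OF finite_subset[OF assms(1) finite_V]] assms(3) by simp
  moreover have "?p \<le> card (B i)"
    by (rule card_mono) (auto simp: finite_coord_space)
  then have "?p \<le> CARD('a) ^ u"
    using card_coord_space[of "block u i", where 'a = 'a] card_block assms(4) by simp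
  ultimately have "?p \<le> CARD('a) ^ min r u" by (simp add: min_def)
  then have "?p * card (orth {..<k} X \<inter> B i) \<le> CARD('a) ^ min r u * card (orth {..<k} X \<inter> B i)"
    by (rule mult_le_mono1)
  moreover have "CARD('a) ^ u = CARD('a) ^ min r u * CARD('a) ^ (u - min r u)"
    by (simp flip: power_add)
  ultimately have "CARD('a) ^ min r u * CARD('a) ^ (u - min r u) \<le> CARD('a) ^ min r u * card (orth {..<k} X \<inter> B i)"
    using card_coord_proj_block_mult_card_orth[OF assms(1,2,4)] by simp
  then show ?thesis by simp
qed

lemma card_code_support_ge:
  assumes D: "D \<subseteq> gen_code k cols" "lin_code n D" "has_dim D r" and "r \<le> k"
  shows "int CARD('a) ^ k - int CARD('a) ^ (k - r) - int h * (int CARD('a) ^ u - int CARD('a) ^ (u - min r u))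
    \<le> int (card (code_support n D)) * (int CARD('a) - 1)"
proof -
  define X where "X = {x \<in> V. encode k cols x \<in> D}"
  have DX: "D = encode k cols ` X"
    using D(1) by (auto simp: X_def gen_code_eq_image_encode)
  have X: "X \<subseteq> V" "is_subspace X"
    unfolding X_def using D(2)
    by (auto intro!: is_subspace_preimage[OF lin_map_encode] simp: lin_code_iff is_subspace_zero)
  have "card X = CARD('a) ^ r"
    using card_has_dim[OF D(3)] card_image[OF inj_on_subset[OF inj_on_encode X(1)]] DX by simp
  then have "card (orth {..<k} X) = CARD('a) ^ (k - r)"
    using card_orth_eq[OF _ X] \<open>r \<le> k\<close> by simp
  moreover have "(\<Sum>i\<in>{1..h}. int CARD('a) ^ u - int (card (orth {..<k} X \<inter> B i)))
      \<le> (\<Sum>i\<in>{1..h}. int CARD('a) ^ u - int CARD('a) ^ (u - min r u))"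
    using card_orth_Int_block_ge[OF X \<open>card X = _\<close>] by (intro sum_mono) (simp flip: of_nat_power)
  ultimately show ?thesis
    using card_code_support[OF X(1)] DX by simp
qed

lemma card_coord_proj_block_spread_ge:
  assumes "i \<in> {1..h}"
  shows "CARD('a) ^ min r u \<le> card (coord_proj (block u i) ` spread u h r ` (coord_space {..<r} :: (nat \<Rightarrow> 'a) set))"
proof -
  let ?F = "\<lambda>a :: nat \<Rightarrow> 'a. coord_proj (block u i) (spread u h r a)"
  have "inj_on ?F (coord_space {..<min r u})"
  proof (rule inj_onI)
    fix a b :: "nat \<Rightarrow> 'a"
    assume ab: "a \<in> coord_space {..<min r u}" "b \<in> coord_space {..<min r u}" "?F a = ?F b"
    have "a t = b t" if "t < min r u" for t
    proof -
      have "(i - 1) * u + t \<in> block u i"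
        using assms that by (cases i) (auto simp: block_def)
      then show ?thesis
        using fun_cong[OF ab(3), of "(i - 1) * u + t"] spread_block_coord[OF ab(1)] spread_block_coord[OF ab(2)]
          assms that by (simp add: coord_proj_def)
    qed
    then show "a = b" using ab(1,2) by (auto simp: coord_space_def fun_eq_iff) (metis not_less)
  qed
  then have "card (?F ` coord_space {..<min r u}) = CARD('a) ^ min r u"
    by (simp add: card_image card_coord_space)
  moreover have "?F ` coord_space {..<min r u} \<subseteq> coord_proj (block u i) ` spread u h r ` coord_space {..<r}"
    by (auto simp: coord_space_def)
  ultimately show ?thesis
    by (metis card_mono finite_imageI finite_coord_space finite_lessThan)
qed

lemma ghw_attained:
  assumes "r \<le> k"
  obtains D where "D \<subseteq> gen_code k cols" "lin_code n D" "has_dim D r"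
    "int (card (code_support n D)) * (int CARD('a) - 1)
      = int CARD('a) ^ k - int CARD('a) ^ (k - r) - int h * (int CARD('a) ^ u - int CARD('a) ^ (u - min r u))"
proof
  let ?X = "spread u h r ` (coord_space {..<r} :: (nat \<Rightarrow> 'a) set)" and ?L = "encode k cols \<circ> spread u h r"
  have X: "?X \<subseteq> V" "is_subspace ?X"
    using spread_in_coord_space[OF assms blocks_fit]
      is_subspace_image[OF lin_map_spread is_subspace_coord_space] by auto
  have "card ?X = CARD('a) ^ r"
    using card_image[OF inj_on_spread[OF u_pos, where 'a = 'a]] card_coord_space[of "{..<r}", where 'a = 'a] by simp
  then have "card (orth {..<k} ?X) = CARD('a) ^ (k - r)"
    using card_orth_eq[OF _ X] assms by simp
  moreover have "card (orth {..<k} ?X \<inter> B i) = CARD('a) ^ (u - min r u)" if "i \<in> {1..h}" for i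
  proof -
    have "CARD('a) ^ min r u * card (orth {..<k} ?X \<inter> B i) \<le> CARD('a) ^ u"
      using card_coord_proj_block_mult_card_orth[OF X that]
        mult_le_mono1[OF card_coord_proj_block_spread_ge[OF that, of r]] by metis
    moreover have "CARD('a) ^ u = CARD('a) ^ min r u * CARD('a) ^ (u - min r u)"
      by (simp flip: power_add)
    ultimately have "card (orth {..<k} ?X \<inter> B i) \<le> CARD('a) ^ (u - min r u)"
      by simp
    then show ?thesis
      using card_orth_Int_block_ge[OF X \<open>card ?X = _\<close> that] by simp
  qed
  ultimately show "int (card (code_support n (?L ` coord_space {..<r}))) * (int CARD('a) - 1)
      = int CARD('a) ^ k - int CARD('a) ^ (k - r) - int h * (int CARD('a) ^ u - int CARD('a) ^ (u - min r u))"
    using card_code_support[OF X(1)] by (simp add: image_comp sum_subtractf)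
  show "?L ` coord_space {..<r} \<subseteq> gen_code k cols"
    using X(1) by (auto simp: gen_code_eq_image_encode)
  show "lin_code n (?L ` coord_space {..<r})"
    unfolding lin_code_iff
    using encode_in_vecs is_subspace_image[OF lin_map_comp[OF lin_map_encode lin_map_spread]
        is_subspace_coord_space] by auto
  show "has_dim (?L ` coord_space {..<r}) r"
    using has_dim_image[OF lin_map_comp[OF lin_map_encode lin_map_spread]]
      comp_inj_on[OF inj_on_spread[OF u_pos] inj_on_subset[OF inj_on_encode X(1)]] by blast
qed

lemma ghw_gen_code:
  assumes "r \<le> k"
  shows "int (ghw n (gen_code k cols) r) * (int CARD('a) - 1)
    = int CARD('a) ^ k - int CARD('a) ^ (k - r) - int h * (int CARD('a) ^ u - int CARD('a) ^ (u - min r u))"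
proof -
  let ?S = "{card (code_support n D) | D. D \<subseteq> gen_code k cols \<and> lin_code n D \<and> has_dim D r}"
  obtain D0 where D0: "D0 \<subseteq> gen_code k cols" "lin_code n D0" "has_dim D0 r"
    "int (card (code_support n D0)) * (int CARD('a) - 1)
      = int CARD('a) ^ k - int CARD('a) ^ (k - r) - int h * (int CARD('a) ^ u - int CARD('a) ^ (u - min r u))"
    using ghw_attained[OF assms] by blast
  have "Min ?S = card (code_support n D0)"
  proof (rule Min_eqI)
    have "?S \<subseteq> {..n}"
      using card_mono[of "{..<n}" "code_support n _"] by (auto simp: code_support_def)
    then show "finite ?S" by (rule finite_subset) simp
    show "card (code_support n D0) \<in> ?S" using D0 by blast
    show "card (code_support n D0) \<le> y" if "y \<in> ?S" for y
    proof -
      obtain D where D: "y = card (code_support n D)" "D \<subseteq> gen_code k cols" "lin_code n D" "has_dim D r"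
        using \<open>y \<in> ?S\<close> by blast
      then have "int (card (code_support n D0)) * (int CARD('a) - 1) \<le> int y * (int CARD('a) - 1)"
        using card_code_support_ge[OF D(2-4) assms] D0(4) by simp
      then show ?thesis using CARD_field_ge_2[where 'a = 'a] by (simp add: mult_le_cancel_right)
    qed
  qed
  then show ?thesis using D0(4) by (simp add: ghw_def)
qed

lemma min_dist_gen_code_nat: "min_dist n (gen_code k cols) = CARD('a) ^ (k - 1) - h * CARD('a) ^ (u - 1)"
  using min_dist_gen_code weight_pos by (simp add: of_nat_diff flip: of_nat_power of_nat_mult of_nat_eq_iff)

lemma is_nkd_code_gen_code: "is_nkd_code n k (min_dist n (gen_code k cols)) (gen_code k cols)"
  using lin_code_gen_code has_dim_gen_code by (simp add: is_nkd_code_def)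

lemma ghw_gen_code_real:
  assumes "r \<le> k"
  shows "real (ghw n (gen_code k cols) r) = ((real CARD('a) ^ k - real CARD('a) ^ (k - r))
    - real h * (real CARD('a) ^ u - real CARD('a) ^ (u - min r u))) / (real CARD('a) - 1)"
proof -
  have "real (ghw n (gen_code k cols) r) * (real CARD('a) - 1) = (real CARD('a) ^ k - real CARD('a) ^ (k - r))
      - real h * (real CARD('a) ^ u - real CARD('a) ^ (u - min r u))"
    using arg_cong[OF ghw_gen_code[OF assms], of real_of_int] by simp
  moreover have "real CARD('a) - 1 \<noteq> 0" using CARD_field_ge_2[where 'a = 'a] by simp
  ultimately show ?thesis by (simp add: field_simps)
qed

lemma ghw_gen_code_le_u:
  "r \<in> {1..u} \<Longrightarrow> real (ghw n (gen_code k cols) r)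
    = ((real CARD('a) ^ k - real CARD('a) ^ (k - r)) - real h * (real CARD('a) ^ u - real CARD('a) ^ (u - r)))
      / (real CARD('a) - 1)"
  using ghw_gen_code_real[of r] u_le_k by simp

lemma ghw_gen_code_ge_u:
  "r \<in> {u..k} \<Longrightarrow> real (ghw n (gen_code k cols) r)
    = ((real CARD('a) ^ k - real CARD('a) ^ (k - r)) - real h * (real CARD('a) ^ u - 1)) / (real CARD('a) - 1)"
  using ghw_gen_code_real[of r] by simp

end

theorem theorem2p4:
  fixes cols :: "(nat \<Rightarrow> 'a::{finite,field}) list"
    and k u h :: nat
  defines "q \<equiv> card (UNIV :: 'a set)"
  assumes "k > 0" and "u \<ge> 2" and "h > 0" and "k \<ge> h * u"
    and "q ^ k - q ^ (k - 1) > h * (q ^ u - 1)"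
    and "least_digit_index q h + u > (\<Sum>i=1..k-u. h div q ^ i)"
    and "proj_reps (U_set k u h) cols"
  shows "real (length cols) = ((real q ^ k - 1) - real h * (real q ^ u - 1)) / (real q - 1)
    \<and> int (min_dist (length cols) (gen_code k cols)) = int q ^ (k - 1) - int h * int q ^ (u - 1)
    \<and> distance_optimal (length cols) k (min_dist (length cols) (gen_code k cols)) (gen_code k cols)
    \<and> card {c \<in> gen_code k cols. hweight (length cols) c = 0} = 1
    \<and> card {c \<in> gen_code k cols. hweight (length cols) c = q ^ (k - 1)} = q ^ (k - h * u) - 1
    \<and> (\<forall>j\<in>{1..h}. card {c \<in> gen_code k cols.
           int (hweight (length cols) c) = int q ^ (k - 1) - int j * int q ^ (u - 1)}
         = (h choose j) * (q ^ u - 1) ^ j * q ^ (k - h * u))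
    \<and> (\<forall>c \<in> gen_code k cols. hweight (length cols) c = 0 \<or> hweight (length cols) c = q ^ (k - 1) \<or>
         (\<exists>j\<in>{1..h}. int (hweight (length cols) c) = int q ^ (k - 1) - int j * int q ^ (u - 1)))
    \<and> (\<forall>r\<in>{1..u}. real (ghw (length cols) (gen_code k cols) r)
         = ((real q ^ k - real q ^ (k - r)) - real h * (real q ^ u - real q ^ (u - r))) / (real q - 1))
    \<and> (\<forall>r\<in>{u..k}. real (ghw (length cols) (gen_code k cols) r)
         = ((real q ^ k - real q ^ (k - r)) - real h * (real q ^ u - 1)) / (real q - 1))"
proof -
  have weight_pos: "h * q ^ (u - 1) < q ^ (k - 1)"
    using weight_pos_if_gap[OF CARD_field_ge_2[where 'a = 'a] assms(2)] assms(3,6) unfolding q_def by simp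
  interpret block_complement_code cols k u h
    using assms weight_pos unfolding q_def by unfold_locales auto
  have "distance_optimal (length cols) k (min_dist (length cols) (gen_code k cols)) (gen_code k cols)"
    using distance_optimal_if_less_griesmer_sum[OF is_nkd_code_gen_code]
      length_less_griesmer_sum[OF CARD_field_ge_2[where 'a = 'a] u_pos h_pos blocks_fit weight_pos[unfolded q_def]
        assms(7)[unfolded q_def] length_cols_int]
    by (simp add: min_dist_gen_code_nat)
  then show ?thesis
    unfolding q_def
    using length_cols min_dist_gen_code card_weight_zero card_weight_max card_weight_drop hweight_cases
      ghw_gen_code_le_u ghw_gen_code_ge_u
    by blast
qed

end
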